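(* Let $\mathfrak{A}=(Q,\Sigma,Q_0,\Delta,F)$ be a non-confluent Büchi automaton with $n=|Q|$ states and let $\mathcal{O}=\{(F_1,b_1),\ldots,(F_k,b_k)\}\subseteq 2^Q\times\mathbb{N}_+$. There exists a deterministic parity automaton $\mathfrak{P}$ over $\Sigma$ such that (1) $\mathfrak{P}$ accepts $w$ if and only if $\mathfrak{A}$ has an accepting run $\rho$ on $w$ such that for every $j\in\{1,\ldots,k\}$ every infix of $\rho$ of length $b_j$ contains at least one state from $F_j$; and (2) $|\mathfrak{P}|\le 2^{(n+1)^2}\cdot\left(\prod_{j=1}^k(b_j+1)\right)^{n}$ and $\mathfrak{P}$ uses at most $2n+1$ priorities.
   Context: A Büchi automaton $(Q,\Sigma,Q_0,\Delta,F)$ has finite state set $Q$, initial states $Q_0$, transitions $\Delta\subseteq Q\times\Sigma\times Q$, and accepts runs $q_0q_1\cdots$ ($q_0\in Q_0$, $(q_m,w_m,q_{m+1})\in\Delta$) visiting $F$ infinitely often. It is non-confluent if for every word $w$ and any two runs $q_0q_1\cdots$ and $q_0'q_1'\cdots$ on $w$, $q_m=q_m'$ implies $q_{m'}=q_{m'}'$ for all $m'<m$. A deterministic parity automaton $(Q',\Sigma,q_0',\delta,c)$ has transition function $\delta\colon Q'\times\Sigma\to Q'$ and priority function $c\colon Q'\to\mathbb{N}$, and accepts a word iff the minimal priority seen infinitely often on its run is even; its size is $|Q'|$ and its number of priorities is $|c(Q')|$. *)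

theory Defs
  imports Main
begin

definition omega_word :: "'a set \<Rightarrow> (nat \<Rightarrow> 'a) \<Rightarrow> bool" where
  "omega_word Sig w \<longleftrightarrow> (\<forall>m. w m \<in> Sig)"

definition buchi_wf :: "'q set \<Rightarrow> 'a set \<Rightarrow> 'q set \<Rightarrow> ('q \<times> 'a \<times> 'q) set \<Rightarrow> 'q set \<Rightarrow> bool" where
  "buchi_wf Q Sig Q0 Delta F \<longleftrightarrow> finite Q \<and> finite Sig \<and> Q0 \<subseteq> Q \<and>
     Delta \<subseteq> Q \<times> Sig \<times> Q \<and> F \<subseteq> Q"

definition buchi_run :: "'q set \<Rightarrow> ('q \<times> 'a \<times> 'q) set \<Rightarrow> (nat \<Rightarrow> 'a) \<Rightarrow> (nat \<Rightarrow> 'q) \<Rightarrow> bool" where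
  "buchi_run Q0 Delta w \<rho> \<longleftrightarrow> \<rho> 0 \<in> Q0 \<and> (\<forall>m. (\<rho> m, w m, \<rho> (Suc m)) \<in> Delta)"

definition buchi_accepting :: "'q set \<Rightarrow> (nat \<Rightarrow> 'q) \<Rightarrow> bool" where
  "buchi_accepting F \<rho> \<longleftrightarrow> (\<exists>\<^sub>\<infinity> m. \<rho> m \<in> F)"

definition non_confluent :: "'q set \<Rightarrow> ('q \<times> 'a \<times> 'q) set \<Rightarrow> bool" where
  "non_confluent Q0 Delta \<longleftrightarrow>
     (\<forall>w \<rho> \<rho>'. buchi_run Q0 Delta w \<rho> \<longrightarrow> buchi_run Q0 Delta w \<rho>' \<longrightarrow>
        (\<forall>m. \<rho> m = \<rho>' m \<longrightarrow> (\<forall>m'<m. \<rho> m' = \<rho>' m')))"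

definition dpa_wf :: "'s set \<Rightarrow> 'a set \<Rightarrow> 's \<Rightarrow> ('s \<Rightarrow> 'a \<Rightarrow> 's) \<Rightarrow> ('s \<Rightarrow> nat) \<Rightarrow> bool" where
  "dpa_wf Q' Sig q0 \<delta> c \<longleftrightarrow> finite Q' \<and> q0 \<in> Q' \<and> (\<forall>q\<in>Q'. \<forall>a\<in>Sig. \<delta> q a \<in> Q')"

fun dpa_run :: "'s \<Rightarrow> ('s \<Rightarrow> 'a \<Rightarrow> 's) \<Rightarrow> (nat \<Rightarrow> 'a) \<Rightarrow> nat \<Rightarrow> 's" where
  "dpa_run q0 \<delta> w 0 = q0"
| "dpa_run q0 \<delta> w (Suc m) = \<delta> (dpa_run q0 \<delta> w m) (w m)"

definition dpa_accepts :: "'s \<Rightarrow> ('s \<Rightarrow> 'a \<Rightarrow> 's) \<Rightarrow> ('s \<Rightarrow> nat) \<Rightarrow> (nat \<Rightarrow> 'a) \<Rightarrow> bool" where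
  "dpa_accepts q0 \<delta> c w \<longleftrightarrow> even (Min {p. \<exists>\<^sub>\<infinity> m. c (dpa_run q0 \<delta> w m) = p})"

definition infix_cond :: "(nat \<Rightarrow> 'q) \<Rightarrow> 'q set \<Rightarrow> nat \<Rightarrow> bool" where
  "infix_cond \<rho> G b \<longleftrightarrow> (\<forall>i. \<exists>m\<in>{i..<i+b}. \<rho> m \<in> G)"

end

theory Submission
  imports Defs "HOL-Library.Infinite_Set" "HOL-Library.FuncSet"
begin

(* Call a finite prefix of a run "valid" if it starts in Q0, its last state can still be
   extended to an infinite run, and it has not yet violated any obligation (G, b); the last
   condition is tracked by one counter per obligation that counts the current length of the
   G-free suffix.  By non-confluence, two valid prefixes
   ending in the same state coincide, so the last states of valid prefixes of length
   0, 1, 2, ... form the layers of a forest in which every node has a unique parent.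

   Completeness: an accepting branch is tracked forever by
       ever deeper nodes, which is only possible finitely often, so some tracking node turns
       green infinitely often.  Soundness: the node whose greenness gives the minimal priority
       is never removed again; Koenig's lemma yields a branch through it, and between two
       green times the branch passes through F. *)

section \<open>History lists\<close>

text \<open>A history list is a list of sets of states read as a forest in preorder: node j
  is a descendant of an earlier node i if its set is contained in that of node i.\<close>

definition covered :: "'q set list \<Rightarrow> nat \<Rightarrow> 'q set" where
  "covered L i = \<Union>{L!j | j. i < j \<and> j < length L \<and> L!j \<subseteq> L!i}"

definition laminar :: "'q set list \<Rightarrow> bool" where
  "laminar L \<longleftrightarrow> (\<forall>i j. i < j \<longrightarrow> j < length L \<longrightarrow> L!j \<subseteq> L!i \<or> L!i \<inter> L!j = {})"

(* Accepting states of node i not covered by a descendant; they spawn a new child of node i. *)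
definition fresh :: "'q set \<Rightarrow> 'q set list \<Rightarrow> nat \<Rightarrow> 'q set" where
  "fresh F L i = (L!i \<inter> F) - covered L i"

(* One step under the successor map D: the old nodes followed by the fresh children, all
   moved forward by D.  Node length L + i is the new child of node i. *)
definition expand :: "'q set \<Rightarrow> ('q set \<Rightarrow> 'q set) \<Rightarrow> 'q set list \<Rightarrow> 'q set list" where
  "expand F D L = map D (L @ map (fresh F L) [0..<length L])"

definition green :: "'q set \<Rightarrow> ('q set \<Rightarrow> 'q set) \<Rightarrow> 'q set list \<Rightarrow> nat \<Rightarrow> bool" where
  "green F D L i \<longleftrightarrow> i < length L \<and> expand F D L ! i \<noteq> {} \<and>
     expand F D L ! i = covered (expand F D L) i"

(* A node survives the step if it is nonempty and not inside an earlier green node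
   (the descendants of a green node are collapsed into it). *)
definition kept :: "'q set \<Rightarrow> ('q set \<Rightarrow> 'q set) \<Rightarrow> 'q set list \<Rightarrow> nat \<Rightarrow> bool" where
  "kept F D L j \<longleftrightarrow> expand F D L ! j \<noteq> {} \<and>
     \<not> (\<exists>i<j. green F D L i \<and> expand F D L ! j \<subseteq> expand F D L ! i)"

definition hnext :: "'q set \<Rightarrow> ('q set \<Rightarrow> 'q set) \<Rightarrow> 'q set list \<Rightarrow> 'q set list" where
  "hnext F D L = map (nth (expand F D L)) (filter (kept F D L) [0..<2 * length L])"

(* Priority of a step: odd 2i+1 if node i is removed, even 2i+2 if node i turns green,
   and 2N+1 (N bounds the length) if nothing happens. *)
definition hprio :: "'q set \<Rightarrow> ('q set \<Rightarrow> 'q set) \<Rightarrow> nat \<Rightarrow> 'q set list \<Rightarrow> nat" where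
  "hprio F D N L = Min ({2*i+1 | i. i < length L \<and> \<not> kept F D L i} \<union>
                       {2*i+2 | i. green F D L i} \<union> {2*N+1})"

definition hist_inv :: "'q set \<Rightarrow> 'q set list \<Rightarrow> bool" where
  "hist_inv S L \<longleftrightarrow> (L = [] \<longleftrightarrow> S = {}) \<and> (L \<noteq> [] \<longrightarrow> L!0 = S) \<and>
     (\<forall>i<length L. L!i \<noteq> {} \<and> L!i \<subseteq> S) \<and> laminar L \<and> (\<forall>i<length L. L!i \<noteq> covered L i)"

(* D is the successor map from S to S' of a relation in which every state has at most one
   predecessor: monotone, disjointness preserving, onto S' from S. *)
definition succ_map :: "('q set \<Rightarrow> 'q set) \<Rightarrow> 'q set \<Rightarrow> 'q set \<Rightarrow> bool" where
  "succ_map D S S' \<longleftrightarrow> (\<forall>X Y. X \<subseteq> Y \<longrightarrow> D X \<subseteq> D Y) \<and> (\<forall>X Y. X \<inter> Y = {} \<longrightarrow> D X \<inter> D Y = {})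
     \<and> D S = S' \<and> (\<forall>X. D X \<subseteq> S')"

lemma expand_length [simp]: "length (expand F D L) = 2 * length L"
  by (simp add: expand_def)

lemma expand_old: "i < length L \<Longrightarrow> expand F D L ! i = D (L!i)"
  by (simp add: expand_def nth_append)

lemma expand_new: "i < length L \<Longrightarrow> expand F D L ! (length L + i) = D (fresh F L i)"
  by (simp add: expand_def nth_append)

lemma covered_subset: "covered L i \<subseteq> L!i"
  by (auto simp: covered_def)

lemma fresh_subset: "fresh F L i \<subseteq> L!i" "fresh F L i \<subseteq> F"
  by (auto simp: fresh_def)

lemma fresh_disjoint_descendant:
  "i < j \<Longrightarrow> j < length L \<Longrightarrow> L!j \<subseteq> L!i \<Longrightarrow> fresh F L i \<inter> L!j = {}"
  by (auto simp: fresh_def covered_def)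

lemma kept_nonempty: "kept F D L j \<Longrightarrow> expand F D L ! j \<noteq> {}"
  by (simp add: kept_def)

lemma kept_not_below_green:
  "kept F D L j \<Longrightarrow> i < j \<Longrightarrow> green F D L i \<Longrightarrow> \<not> expand F D L ! j \<subseteq> expand F D L ! i"
  by (auto simp: kept_def)

lemma succ_map_disjoint: "succ_map D S S' \<Longrightarrow> X \<inter> Y = {} \<Longrightarrow> D X \<inter> D Y = {}"
  unfolding succ_map_def by blast

lemma succ_map_empty: "succ_map D S S' \<Longrightarrow> D {} = {}"
  unfolding succ_map_def by blast

lemma expand_subset: "succ_map D S S' \<Longrightarrow> j < 2 * length L \<Longrightarrow> expand F D L ! j \<subseteq> S'"
  unfolding expand_def succ_map_def by (subst nth_map) (auto simp del: map_append)

subsection \<open>Laminarity is preserved\<close>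

lemma fresh_disjoint:
  assumes "laminar L" "i < i'" "i' < length L"
  shows "fresh F L i \<inter> fresh F L i' = {}"
proof -
  from assms have "L!i' \<subseteq> L!i \<or> L!i \<inter> L!i' = {}" by (auto simp: laminar_def)
  then show ?thesis
  proof
    assume "L!i' \<subseteq> L!i"
    with fresh_disjoint_descendant[OF assms(2,3) this] fresh_subset[of F L i'] show ?thesis by blast
  next
    assume "L!i \<inter> L!i' = {}"
    with fresh_subset[of F L i] fresh_subset[of F L i'] show ?thesis by blast
  qed
qed

lemma fresh_nested:
  assumes "laminar L" "i < length L" "i' < length L"
  shows "fresh F L i' \<subseteq> L!i \<or> L!i \<inter> fresh F L i' = {}"
proof -
  consider "i = i'" | "i < i'" | "i' < i" by linarith
  then show ?thesis
  proof cases
    case 1 then show ?thesis using fresh_subset(1)[of F L i'] by blast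
  next
    case 2
    with assms have "L!i' \<subseteq> L!i \<or> L!i \<inter> L!i' = {}" by (auto simp: laminar_def)
    then show ?thesis using fresh_subset[of F L i'] by blast
  next
    case 3
    with assms have "L!i \<subseteq> L!i' \<or> L!i' \<inter> L!i = {}" by (auto simp: laminar_def)
    then show ?thesis using fresh_disjoint_descendant[OF 3 assms(2)] fresh_subset[of F L i'] by blast
  qed
qed

lemma laminar_append_fresh:
  assumes lam: "laminar L"
  shows "laminar (L @ map (fresh F L) [0..<length L])"
  unfolding laminar_def
proof (intro allI impI)
  let ?k = "length L" and ?M = "L @ map (fresh F L) [0..<length L]"
  fix i j assume ij: "i < j" "j < length ?M"
  show "?M!j \<subseteq> ?M!i \<or> ?M!i \<inter> ?M!j = {}"
  proof (cases "j < ?k")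
    case True
    with ij lam show ?thesis by (auto simp: laminar_def nth_append)
  next
    case False
    then obtain j' where j': "j = ?k + j'" "j' < ?k" using ij by (intro that[of "j - ?k"]) auto
    show ?thesis
    proof (cases "i < ?k")
      case True
      with fresh_nested[OF lam True j'(2)] j' show ?thesis by (simp add: nth_append)
    next
      case False
      then obtain i' where i': "i = ?k + i'" "i' < ?k" using ij j' by (intro that[of "i - ?k"]) auto
      with ij j' have "i' < j'" by simp
      with fresh_disjoint[OF lam this j'(2)] i' j' show ?thesis by (simp add: nth_append)
    qed
  qed
qed

lemma laminar_map:
  assumes "laminar L" "succ_map D S S'"
  shows "laminar (map D L)"
  using assms unfolding laminar_def succ_map_def by (metis length_map nth_map order.strict_trans)

lemma laminar_expand: "laminar L \<Longrightarrow> succ_map D S S' \<Longrightarrow> laminar (expand F D L)"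
  unfolding expand_def by (rule laminar_map[OF laminar_append_fresh])

lemma laminar_select:
  assumes "laminar M" "sorted_wrt (<) xs" "set xs \<subseteq> {..<length M}"
  shows "laminar (map (nth M) xs)"
  unfolding laminar_def
proof (intro allI impI)
  fix i j assume ij: "i < j" "j < length (map (nth M) xs)"
  then have "xs!i < xs!j" using assms(2) by (simp add: sorted_wrt_iff_nth_less)
  moreover have "xs!j < length M" using assms(3) ij by (simp add: subset_iff)
  ultimately show "map (nth M) xs ! j \<subseteq> map (nth M) xs ! i \<or> map (nth M) xs ! i \<inter> map (nth M) xs ! j = {}"
    using assms(1) ij unfolding laminar_def by simp
qed

lemma covered_select:
  assumes "sorted_wrt (<) xs" "set xs \<subseteq> {..<length M}" "p < length xs"
  shows "covered (map (nth M) xs) p \<subseteq>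
           \<Union>{M!j | j. xs!p < j \<and> j < length M \<and> M!j \<subseteq> M!(xs!p) \<and> j \<in> set xs}"
proof
  fix x assume "x \<in> covered (map (nth M) xs) p"
  then obtain q where q: "p < q" "q < length xs" "M!(xs!q) \<subseteq> M!(xs!p)" "x \<in> M!(xs!q)"
    by (auto simp: covered_def)
  have "xs!p < xs!q" using assms(1) q by (simp add: sorted_wrt_iff_nth_less)
  moreover have "xs!q < length M" using assms(2) q by (simp add: subset_iff)
  moreover have "xs!q \<in> set xs" using q by simp
  ultimately show "x \<in> \<Union>{M!j | j. xs!p < j \<and> j < length M \<and> M!j \<subseteq> M!(xs!p) \<and> j \<in> set xs}"
    using q by blast
qed

lemma covered_new_empty:
  assumes "laminar L" "succ_map D S S'" "length L \<le> j" "j < 2 * length L"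
  shows "covered (expand F D L) j = {}"
proof -
  have "expand F D L ! j' = {}"
    if a: "j < j'" "j' < 2 * length L" "expand F D L ! j' \<subseteq> expand F D L ! j" for j'
  proof -
    obtain i where i: "j = length L + i" "i < length L"
      using assms(3,4) by (intro that[of "j - length L"]) simp_all
    obtain i' where i': "j' = length L + i'" "i' < length L"
      using a assms(3) by (intro that[of "j' - length L"]) simp_all
    have "i < i'" using a i i' by simp
    then have "D (fresh F L i) \<inter> D (fresh F L i') = {}"
      by (rule succ_map_disjoint[OF assms(2) fresh_disjoint[OF assms(1) _ i'(2)]])
    then show ?thesis using a(3) expand_new[OF i(2)] expand_new[OF i'(2)] i i' by auto
  qed
  then show ?thesis unfolding covered_def by auto
qed

lemma filter_upt_nth_card:
  assumes "P j" "j < n"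
  shows "card {i. i < j \<and> P i} < length (filter P [0..<n]) \<and>
         filter P [0..<n] ! card {i. i < j \<and> P i} = j"
proof -
  have split: "[0..<n] = [0..<j] @ j # [Suc j..<n]"
    using upt_add_eq_append[of 0 j "n-j"] assms(2) by (simp add: upt_conv_Cons)
  have "length (filter P [0..<j]) = card {i. i < j \<and> P i}"
    by (simp add: length_filter_conv_card cong: conj_cong)
  then show ?thesis using assms(1) unfolding split by (simp add: nth_append)
qed

lemma hnext_length: "length (hnext F D L) = length (filter (kept F D L) [0..<2 * length L])"
  by (simp add: hnext_def)

lemma hnext_nth:
  "p < length (hnext F D L) \<Longrightarrow>
   hnext F D L ! p = expand F D L ! (filter (kept F D L) [0..<2 * length L] ! p)"
  by (simp add: hnext_def)

lemma hnext_source: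
  assumes "p < length (hnext F D L)"
  shows "kept F D L (filter (kept F D L) [0..<2 * length L] ! p) \<and>
         filter (kept F D L) [0..<2 * length L] ! p < 2 * length L"
  using nth_mem[of p "filter (kept F D L) [0..<2 * length L]"] assms
  by (simp add: hnext_length del: nth_mem)

lemma hnext_target:
  assumes "kept F D L j" "j < 2 * length L"
  shows "card {i. i < j \<and> kept F D L i} < length (hnext F D L) \<and>
         hnext F D L ! card {i. i < j \<and> kept F D L i} = expand F D L ! j"
  using filter_upt_nth_card[of "kept F D L" j "2 * length L", OF assms] by (simp add: hnext_def)

lemma hnext_root:
  assumes inv: "hist_inv S L" and dg: "succ_map D S S'"
  shows "(hnext F D L = [] \<longleftrightarrow> S' = {}) \<and> (hnext F D L \<noteq> [] \<longrightarrow> hnext F D L ! 0 = S')"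
proof (cases "S' = {}")
  case True
  then have "\<forall>j < 2 * length L. \<not> kept F D L j" using expand_subset[OF dg] unfolding kept_def by blast
  then show ?thesis using True by (simp add: hnext_def filter_empty_conv)
next
  case False
  have DS: "D S = S'" using dg by (simp add: succ_map_def)
  then have "L \<noteq> []" using inv succ_map_empty[OF dg] False unfolding hist_inv_def by auto
  then have L0: "L!0 = S" and lpos: "0 < length L" using inv by (auto simp: hist_inv_def)
  have M0: "expand F D L ! 0 = S'" using expand_old[OF lpos] L0 DS by simp
  have "kept F D L 0" using M0 False by (simp add: kept_def)
  from hnext_target[OF this] lpos M0 False show ?thesis by auto
qed

(* A kept node is not covered by its kept descendants: either it was green, and then all its
   descendants were removed, or it was not covered even before the selection. *)
lemma hnext_not_covered:
  assumes inv: "hist_inv S L" and dg: "succ_map D S S'" and p: "p < length (hnext F D L)"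
  shows "hnext F D L ! p \<noteq> covered (hnext F D L) p"
proof -
  let ?M = "expand F D L" and ?ks = "filter (kept F D L) [0..<2 * length L]"
  let ?j = "?ks ! p"
  have lamL: "laminar L" using inv by (simp add: hist_inv_def)
  have sorted: "sorted_wrt (<) ?ks" by (simp add: sorted_wrt_filter)
  have ks_set: "set ?ks \<subseteq> {..<length ?M}" by auto
  have kj: "kept F D L ?j" "?j < 2 * length L" using hnext_source[OF p] by auto
  have Np: "hnext F D L ! p = ?M ! ?j" using hnext_nth[OF p] .
  have ne: "?M ! ?j \<noteq> {}" using kept_nonempty[OF kj(1)] .
  have sub: "covered (hnext F D L) p \<subseteq>
      \<Union>{?M!j' | j'. ?j < j' \<and> j' < length ?M \<and> ?M!j' \<subseteq> ?M!?j \<and> j' \<in> set ?ks}"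
    unfolding hnext_def by (rule covered_select[OF sorted ks_set]) (use p in \<open>simp add: hnext_length\<close>)
  show ?thesis
  proof (cases "green F D L ?j")
    case True
    have not_kept: "\<not> kept F D L j'" if "?j < j'" "?M!j' \<subseteq> ?M!?j" for j'
      using kept_not_below_green[OF _ that(1) True] that(2) by blast
    have "covered (hnext F D L) p = {}"
    proof (rule equals0I)
      fix x assume "x \<in> covered (hnext F D L) p"
      then obtain j' where j': "?j < j'" "?M!j' \<subseteq> ?M!?j" "j' \<in> set ?ks" using sub by blast
      from j'(3) have "kept F D L j'" by simp
      with not_kept[OF j'(1,2)] show False by contradiction
    qed
    then show ?thesis using Np ne by simp
  next
    case False
    have ndesc: "?M!?j \<noteq> covered ?M ?j"
    proof (cases "?j < length L")
      case True then show ?thesis using False ne by (simp add: green_def)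
    next
      case False
      then have "covered ?M ?j = {}" using covered_new_empty[OF lamL dg] kj by simp
      then show ?thesis using ne by simp
    qed
    have "\<Union>{?M!j' | j'. ?j < j' \<and> j' < length ?M \<and> ?M!j' \<subseteq> ?M!?j \<and> j' \<in> set ?ks} \<subseteq> covered ?M ?j"
      unfolding covered_def by (rule Union_mono) auto
    then have "covered (hnext F D L) p \<subseteq> covered ?M ?j" using sub by (rule subset_trans[rotated])
    then show ?thesis using Np ndesc covered_subset[of ?M ?j] by auto
  qed
qed

lemma hist_inv_step:
  assumes inv: "hist_inv S L" and dg: "succ_map D S S'"
  shows "hist_inv S' (hnext F D L)"
proof -
  have nodes: "hnext F D L ! p \<noteq> {} \<and> hnext F D L ! p \<subseteq> S'" if p: "p < length (hnext F D L)" for p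
  proof -
    obtain j where j: "kept F D L j" "j < 2 * length L" "hnext F D L ! p = expand F D L ! j"
      using hnext_source[OF p] hnext_nth[OF p] by blast
    show ?thesis using kept_nonempty[OF j(1)] expand_subset[OF dg j(2)] j(3) by simp
  qed
  have "laminar (hnext F D L)" unfolding hnext_def
    using inv by (intro laminar_select laminar_expand[OF _ dg]) (auto simp: hist_inv_def sorted_wrt_filter)
  then show ?thesis unfolding hist_inv_def
    using hnext_root[OF inv dg] nodes hnext_not_covered[OF inv dg] by blast
qed

(* Every node has a private state not covered by its descendants, so there are at most
   |S| nodes. *)
lemma hist_inv_length:
  assumes inv: "hist_inv S L" and fin: "finite S"
  shows "length L \<le> card S"
proof -
  have lam: "laminar L" using inv unfolding hist_inv_def by blast
  define f where "f i = (SOME x. x \<in> L!i \<and> x \<notin> covered L i)" for i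
  have f: "f i \<in> L!i \<and> f i \<notin> covered L i" if "i < length L" for i
  proof -
    have "L!i \<noteq> covered L i" using inv that unfolding hist_inv_def by blast
    then have "\<exists>x. x \<in> L!i \<and> x \<notin> covered L i" using covered_subset[of L i] by blast
    then show ?thesis unfolding f_def by (rule someI_ex)
  qed
  have distinct: "f i \<noteq> f j" if ij: "i < j" "j < length L" for i j
  proof
    assume eq: "f i = f j"
    have fi: "f i \<in> L!i" "f i \<notin> covered L i" and fj: "f j \<in> L!j" using f ij by auto
    show False
    proof (cases "L!j \<subseteq> L!i")
      case True
      then have "L!j \<subseteq> covered L i" using ij unfolding covered_def by blast
      then show False using fi fj eq by (metis subsetD)
    next
      case False
      then have "L!i \<inter> L!j = {}" using lam ij unfolding laminar_def by blast
      then show False using fi fj eq by (metis disjoint_iff)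
    qed
  qed
  have "inj_on f {..<length L}"
    by (rule linorder_inj_onI') (simp add: distinct)
  moreover have "f ` {..<length L} \<subseteq> S" using f inv unfolding hist_inv_def by blast
  ultimately have "card {..<length L} \<le> card S" by (rule card_inj_on_le[OF _ _ fin])
  then show ?thesis by simp
qed

section \<open>Limits of natural-number sequences\<close>

lemma INFM_finite_range:
  fixes f :: "nat \<Rightarrow> 'b"
  assumes "\<exists>\<^sub>\<infinity>m. P m" "\<And>m. P m \<Longrightarrow> f m \<in> A" "finite A"
  shows "\<exists>v\<in>A. \<exists>\<^sub>\<infinity>m. P m \<and> f m = v"
proof -
  have inf: "infinite {m. P m}" using assms(1) by (simp add: INFM_iff_infinite)
  have "finite (f ` {m. P m})" using assms(2,3) by (blast intro: finite_subset)
  from inf_img_fin_dom'[OF this inf] obtain v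
    where v: "v \<in> f ` {m. P m}" "infinite (f -` {v} \<inter> {m. P m})" by blast
  have "f -` {v} \<inter> {m. P m} = {m. P m \<and> f m = v}" by auto
  with v show ?thesis using assms(2) by (auto simp: INFM_iff_infinite)
qed

lemma eventually_lower_bound:
  fixes f :: "nat \<Rightarrow> nat"
  assumes "\<forall>v<p. \<not> (\<exists>\<^sub>\<infinity>m. f m = v)"
  shows "\<exists>T. \<forall>m\<ge>T. p \<le> f m"
proof -
  have "\<forall>v\<in>{..<p}. \<forall>\<^sub>\<infinity>m. f m \<noteq> v" using assms by simp
  then have "\<forall>\<^sub>\<infinity>m. \<forall>v\<in>{..<p}. f m \<noteq> v" by (rule eventually_ball_finite[rotated]) simp
  then obtain T where "\<forall>m\<ge>T. \<forall>v\<in>{..<p}. f m \<noteq> v" by (auto simp: MOST_nat_le)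
  then have "\<forall>m\<ge>T. p \<le> f m" using not_le by blast
  then show ?thesis by blast
qed

lemma nonincreasing_eventually_const:
  fixes f :: "nat \<Rightarrow> nat"
  assumes "\<forall>m\<ge>T. f (Suc m) \<le> f m"
  shows "\<exists>T'\<ge>T. \<forall>m\<ge>T'. f m = f T'"
  using assms
proof (induction "f T" arbitrary: T rule: less_induct)
  case less
  have mono: "f m' \<le> f m" if "T \<le> m" "m \<le> m'" for m m'
    using that(2)
  proof (induction m' rule: dec_induct)
    case (step n)
    have "f (Suc n) \<le> f n" using less.prems that(1) step.hyps(1) by simp
    then show ?case using step.IH by linarith
  qed simp
  show ?case
  proof (cases "\<forall>m\<ge>T. f m = f T")
    case False
    then obtain m where m: "m \<ge> T" "f m \<noteq> f T" by blast
    then have "f m < f T" using mono[of T m] by simp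
    moreover have "\<forall>m'\<ge>m. f (Suc m') \<le> f m'" using less.prems m(1) by simp
    ultimately obtain T' where T': "T' \<ge> m" "\<forall>m'\<ge>T'. f m' = f T'" using less.hyps by blast
    then show ?thesis using m(1) le_trans by blast
  qed blast
qed

section \<open>History lists along a forest with unique parents\<close>

locale layered_forest =
  fixes S :: "nat \<Rightarrow> 'q set" and E :: "nat \<Rightarrow> 'q \<Rightarrow> 'q \<Rightarrow> bool" and F :: "'q set" and N :: nat
  assumes layer_finite: "finite (S m)"
    and layer_card: "card (S m) \<le> N"
    and edge_source: "E m x y \<Longrightarrow> x \<in> S m"
    and edge_target: "E m x y \<Longrightarrow> y \<in> S (Suc m)"
    and parent_exists: "y \<in> S (Suc m) \<Longrightarrow> \<exists>x. E m x y"
    and parent_unique: "E m x y \<Longrightarrow> E m x' y \<Longrightarrow> x = x'"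
begin

definition post :: "nat \<Rightarrow> 'q set \<Rightarrow> 'q set" where
  "post m X = {y. \<exists>x\<in>X. E m x y}"

fun hist :: "nat \<Rightarrow> 'q set list" where
  "hist 0 = (if S 0 = {} then [] else [S 0])"
| "hist (Suc m) = hnext F (post m) (hist m)"

definition prio :: "nat \<Rightarrow> nat" where
  "prio m = hprio F (post m) N (hist m)"

abbreviation "hlen m \<equiv> length (hist m)"
abbreviation "hexp m \<equiv> expand F (post m) (hist m)"
abbreviation "hkept m \<equiv> kept F (post m) (hist m)"
abbreviation "hgreen m \<equiv> green F (post m) (hist m)"

(* Position in hist (Suc m) of the node j of hexp m, if it is kept. *)
definition newpos :: "nat \<Rightarrow> nat \<Rightarrow> nat" where
  "newpos m j = card {i. i < j \<and> hkept m i}"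

lemma postI: "x \<in> X \<Longrightarrow> E m x y \<Longrightarrow> y \<in> post m X"
  by (auto simp: post_def)

lemma post_succ_map: "succ_map (post m) (S m) (S (Suc m))"
proof -
  have "post m X \<inter> post m Y = {}" if "X \<inter> Y = {}" for X Y
    using that parent_unique[of m _ _] by (auto simp: post_def)
  moreover have "post m (S m) = S (Suc m)"
  proof
    show "post m (S m) \<subseteq> S (Suc m)" using edge_target by (auto simp: post_def)
    show "S (Suc m) \<subseteq> post m (S m)" using parent_exists edge_source by (fastforce simp: post_def)
  qed
  moreover have "post m X \<subseteq> post m Y" if "X \<subseteq> Y" for X Y
    using that by (auto simp: post_def)
  moreover have "post m X \<subseteq> S (Suc m)" for X
    using edge_target by (auto simp: post_def)
  ultimately show ?thesis unfolding succ_map_def by blast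
qed

lemma hist_invariant: "hist_inv (S m) (hist m)"
proof (induction m)
  case 0
  show ?case by (simp add: hist_inv_def laminar_def covered_def)
next
  case (Suc m)
  then show ?case using hist_inv_step[OF Suc post_succ_map] by simp
qed

lemma hlen_bound: "hlen m \<le> N"
  using hist_inv_length[OF hist_invariant layer_finite] layer_card le_trans by blast

lemma laminar_hexp: "laminar (hexp m)"
  using hist_invariant[of m] by (intro laminar_expand[OF _ post_succ_map]) (simp add: hist_inv_def)

lemma hist_nonempty: "i < hlen m \<Longrightarrow> hist m ! i \<noteq> {}"
  using hist_invariant by (simp add: hist_inv_def)

lemma hist_subset: "i < hlen m \<Longrightarrow> hist m ! i \<subseteq> S m"
  using hist_invariant by (simp add: hist_inv_def)

lemma hist_root: "S m \<noteq> {} \<Longrightarrow> 0 < hlen m \<and> hist m ! 0 = S m"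
  using hist_invariant[of m] unfolding hist_inv_def by auto

lemma hexp_old: "i < hlen m \<Longrightarrow> hexp m ! i = post m (hist m ! i)"
  by (rule expand_old)

lemma hexp_new: "i < hlen m \<Longrightarrow> hexp m ! (hlen m + i) = post m (fresh F (hist m) i)"
  by (rule expand_new)

lemma newpos_kept:
  "hkept m j \<Longrightarrow> j < 2 * hlen m \<Longrightarrow> newpos m j < hlen (Suc m) \<and> hist (Suc m) ! newpos m j = hexp m ! j"
  using hnext_target[of F "post m" "hist m" j] by (simp add: newpos_def)

lemma newpos_le: "newpos m j \<le> j"
proof -
  have "{i. i < j \<and> hkept m i} \<subseteq> {..<j}" by auto
  then have "newpos m j \<le> card {..<j}" unfolding newpos_def by (rule card_mono[rotated]) simp
  then show ?thesis by simp
qed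

lemma newpos_eq_iff: "newpos m j = j \<longleftrightarrow> (\<forall>i<j. hkept m i)"
proof
  assume eq: "newpos m j = j"
  show "\<forall>i<j. hkept m i"
  proof (intro allI impI)
    fix i assume i: "i < j"
    show "hkept m i"
    proof (rule ccontr)
      assume "\<not> hkept m i"
      then have "{i. i < j \<and> hkept m i} \<subseteq> {..<j} - {i}" by auto
      then have "newpos m j \<le> card ({..<j} - {i})" unfolding newpos_def by (rule card_mono[rotated]) simp
      then show False using eq i by simp
    qed
  qed
next
  assume "\<forall>i<j. hkept m i"
  then have "{i. i < j \<and> hkept m i} = {..<j}" by auto
  then show "newpos m j = j" by (simp add: newpos_def)
qed

lemma newpos_mono: "l \<le> l' \<Longrightarrow> newpos m l \<le> newpos m l'"
  unfolding newpos_def by (rule card_mono) auto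

lemma newpos_gt: "\<forall>i\<le>j. hkept m i \<Longrightarrow> j < l \<Longrightarrow> j < newpos m l"
proof -
  assume "\<forall>i\<le>j. hkept m i" "j < l"
  then have "{..j} \<subseteq> {i. i < l \<and> hkept m i}" by auto
  then have "card {..j} \<le> newpos m l" unfolding newpos_def by (rule card_mono[rotated]) simp
  then show ?thesis by simp
qed

lemma hist_Suc_source:
  assumes "p < hlen (Suc m)"
  obtains l where "hkept m l" "l < 2 * hlen m" "newpos m l = p" "hist (Suc m) ! p = hexp m ! l"
proof -
  let ?ks = "filter (hkept m) [0..<2 * hlen m]"
  define l where "l = ?ks ! p"
  have p: "p < length ?ks" using assms hnext_length[of F "post m" "hist m"] by simp
  have l: "hkept m l" "l < 2 * hlen m"
    using hnext_source[of p F "post m" "hist m"] assms by (simp_all add: l_def)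
  have pos: "newpos m l < length ?ks" "?ks ! newpos m l = l"
    using filter_upt_nth_card[of "hkept m" l "2 * hlen m", OF l] by (simp_all add: newpos_def)
  have "distinct ?ks" by simp
  from nth_eq_iff_index_eq[OF this pos(1) p] pos(2) have "newpos m l = p" by (simp add: l_def)
  then show ?thesis using that l hnext_nth[of p F "post m" "hist m"] assms by (simp add: l_def)
qed

lemma prio_cases:
  "prio m = 2*N+1 \<or> (\<exists>i. i < hlen m \<and> \<not> hkept m i \<and> prio m = 2*i+1) \<or>
   (\<exists>i. hgreen m i \<and> prio m = 2*i+2)"
proof -
  let ?A = "{2*i+1 | i. i < hlen m \<and> \<not> hkept m i} \<union> {2*i+2 | i. hgreen m i} \<union> {2*N+1}"
  have "?A \<subseteq> {..2*N+2}" using hlen_bound[of m] by (auto simp: green_def)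
  then have "finite ?A" by (rule finite_subset) simp
  then have "Min ?A \<in> ?A" by (rule Min_in) simp
  then show ?thesis by (auto simp: prio_def hprio_def)
qed

lemma prio_le:
  shows prio_le_default: "prio m \<le> 2*N+1"
    and prio_le_removed: "i < hlen m \<Longrightarrow> \<not> hkept m i \<Longrightarrow> prio m \<le> 2*i+1"
    and prio_le_green: "hgreen m i \<Longrightarrow> prio m \<le> 2*i+2"
proof -
  let ?A = "{2*i+1 | i. i < hlen m \<and> \<not> hkept m i} \<union> {2*i+2 | i. hgreen m i} \<union> {2*N+1}"
  have "?A \<subseteq> {..2*N+2}" using hlen_bound[of m] by (auto simp: green_def)
  then have fin: "finite ?A" by (rule finite_subset) simp
  have "prio m \<le> a" if "a \<in> ?A" for a
    unfolding prio_def hprio_def by (rule Min_le[OF fin that])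
  then show "prio m \<le> 2*N+1" "i < hlen m \<Longrightarrow> \<not> hkept m i \<Longrightarrow> prio m \<le> 2*i+1"
    "hgreen m i \<Longrightarrow> prio m \<le> 2*i+2" by auto
qed

lemma prio_odd: "odd (prio m) \<Longrightarrow> prio m = 2*N+1 \<or> (\<exists>i. i < hlen m \<and> \<not> hkept m i \<and> prio m = 2*i+1)"
  using prio_cases[of m] by auto

lemma prio_even: "even (prio m) \<Longrightarrow> \<exists>i. hgreen m i \<and> prio m = 2*i+2"
  using prio_cases[of m] by auto

lemma prio_bounds: "prio m \<in> {1..2*N+1}"
  using prio_cases[of m] prio_le_default[of m] by auto

definition limit_prios :: "nat set" where
  "limit_prios = {p. \<exists>\<^sub>\<infinity>m. prio m = p}"

lemma INFM_prio: "\<exists>\<^sub>\<infinity>m. P m \<Longrightarrow> \<exists>v. \<exists>\<^sub>\<infinity>m. P m \<and> prio m = v"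
  using INFM_finite_range[of P prio "{1..2*N+1}"] prio_bounds by blast

lemma min_limit_prio:
  shows "Min limit_prios \<in> limit_prios" and "p \<in> limit_prios \<Longrightarrow> Min limit_prios \<le> p"
proof -
  have "limit_prios \<subseteq> {1..2*N+1}"
    using prio_bounds by (auto simp: limit_prios_def dest: INFM_EX)
  then have fin: "finite limit_prios" by (rule finite_subset) simp
  have "limit_prios \<noteq> {}" using INFM_prio[of "\<lambda>_. True"] by (auto simp: limit_prios_def)
  then show "Min limit_prios \<in> limit_prios" "p \<in> limit_prios \<Longrightarrow> Min limit_prios \<le> p"
    using Min_in[OF fin] Min_le[OF fin] by auto
qed

subsection \<open>An accepting branch forces an even limit priority\<close>

context
  fixes x :: "nat \<Rightarrow> 'q"
  assumes branch: "\<forall>m. E m (x m) (x (Suc m))"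
begin

lemma branch_in_layer: "x m \<in> S m"
  using edge_source branch by blast

lemma branch_in_hexp: "i < hlen m \<Longrightarrow> x m \<in> hist m ! i \<Longrightarrow> x (Suc m) \<in> hexp m ! i"
  using hexp_old[of i m] postI[of "x m" "hist m ! i" m "x (Suc m)"] branch by simp

definition tracking :: "nat \<Rightarrow> nat \<Rightarrow> bool" where
  "tracking m j \<longleftrightarrow> j < hlen m \<and> x m \<in> hist m ! j \<and> (\<forall>i\<le>j. hkept m i)"

definition deeper :: "nat \<Rightarrow> nat \<Rightarrow> bool" where
  "deeper m j \<longleftrightarrow> (\<exists>i. j < i \<and> i < hlen m \<and> x m \<in> hist m ! i)"

definition depth :: "nat \<Rightarrow> nat \<Rightarrow> nat" where
  "depth m j = (LEAST i. j < i \<and> i < hlen m \<and> x m \<in> hist m ! i)"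

lemma depth_props: "deeper m j \<Longrightarrow> j < depth m j \<and> depth m j < hlen m \<and> x m \<in> hist m ! depth m j"
  unfolding deeper_def depth_def by (rule LeastI_ex)

lemma depth_le: "j < i \<Longrightarrow> i < hlen m \<Longrightarrow> x m \<in> hist m ! i \<Longrightarrow> depth m j \<le> i"
  unfolding depth_def by (rule Least_le) simp

lemma root_tracking: "tracking m 0"
proof -
  have "S m \<noteq> {}" using branch_in_layer by blast
  then have r: "0 < hlen m" "hist m ! 0 = S m" using hist_root by auto
  have "x (Suc m) \<in> hexp m ! 0" using branch_in_hexp[OF r(1)] r(2) branch_in_layer by simp
  then have "hkept m 0" unfolding kept_def by blast
  then show ?thesis using r branch_in_layer by (simp add: tracking_def)
qed

(* If node j tracks the branch forever and turns green infinitely often, then 2j+2 recurs,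
   while all odd priorities from then on exceed 2j+2. *)
lemma tracking_green_even:
  assumes tr: "\<forall>m\<ge>T. tracking m j" and green: "\<exists>\<^sub>\<infinity>m. hgreen m j"
  shows "even (Min limit_prios)"
proof -
  have odd_big: "2*j+3 \<le> prio m" if "m \<ge> T" "odd (prio m)" for m
  proof -
    have tm: "tracking m j" using tr that(1) by simp
    then have "j < N" using hlen_bound[of m] by (simp add: tracking_def)
    from prio_odd[OF that(2)] show ?thesis
    proof
      assume "\<exists>i. i < hlen m \<and> \<not> hkept m i \<and> prio m = 2*i+1"
      then obtain i where i: "\<not> hkept m i" "prio m = 2*i+1" by blast
      have "\<not> i \<le> j" using tm i(1) by (auto simp: tracking_def)
      then show ?thesis using i(2) by simp
    qed (use \<open>j < N\<close> in simp)
  qed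
  have "\<exists>\<^sub>\<infinity>m. hgreen m j" by (fact green)
  from INFM_prio[OF this] obtain v where v: "\<exists>\<^sub>\<infinity>m. hgreen m j \<and> prio m = v" by blast
  then obtain m0 where m0: "hgreen m0 j" "prio m0 = v" using INFM_EX by blast
  have "v \<in> limit_prios" using INFM_mono[OF v] by (simp add: limit_prios_def)
  then have min_le: "Min limit_prios \<le> 2*j+2" using min_limit_prio(2) prio_le_green[OF m0(1)] m0(2) by fastforce
  have "\<exists>\<^sub>\<infinity>m. prio m = Min limit_prios" using min_limit_prio(1) by (simp add: limit_prios_def)
  then have "\<exists>\<^sub>\<infinity>m. prio m = Min limit_prios \<and> T \<le> m" by (rule INFM_conjI[OF _ MOST_ge_nat])
  then obtain m where m: "prio m = Min limit_prios" "T \<le> m" using INFM_EX by blast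
  show ?thesis using odd_big[OF m(2)] m(1) min_le by fastforce
qed

(* If j tracks the branch and the branch is in a deeper node or in F, then after the step the
   branch lies in some node after j: a deeper old node, or else the fresh child of j. *)
lemma branch_moves_below:
  assumes tr: "tracking m j" and deep: "deeper m j \<or> x m \<in> F"
  shows "\<exists>l. j < l \<and> l < 2 * hlen m \<and> x (Suc m) \<in> hexp m ! l"
proof (cases "deeper m j")
  case True
  then obtain i where "j < i" "i < hlen m" "x m \<in> hist m ! i" by (auto simp: deeper_def)
  then show ?thesis using branch_in_hexp by (intro exI[of _ i]) auto
next
  case False
  have jk: "j < hlen m" and xj: "x m \<in> hist m ! j" using tr by (auto simp: tracking_def)
  from False have "x m \<notin> covered (hist m) j" by (auto simp: deeper_def covered_def)
  then have "x m \<in> fresh F (hist m) j" using xj deep False by (simp add: fresh_def)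
  then have "x (Suc m) \<in> hexp m ! (hlen m + j)" using hexp_new[OF jk] branch by (auto intro: postI)
  moreover have "j < hlen m + j" "hlen m + j < 2 * hlen m" using jk by linarith+
  ultimately show ?thesis by blast
qed

lemma tracking_successor:
  assumes tr: "tracking m j" and not_green: "\<not> hgreen m j" and deep: "deeper m j \<or> x m \<in> F"
  shows "\<exists>l. j < l \<and> l < 2 * hlen m \<and> hkept m l \<and> x (Suc m) \<in> hexp m ! l \<and>
             (\<forall>i. j < i \<and> i < hlen m \<and> x m \<in> hist m ! i \<longrightarrow> l \<le> i)"
proof -
  have jk: "j < hlen m" and xj: "x m \<in> hist m ! j" and kept_upto: "\<forall>i\<le>j. hkept m i"
    using tr by (auto simp: tracking_def)
  define A where "A = {l. j < l \<and> l < 2 * hlen m \<and> x (Suc m) \<in> hexp m ! l}"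
  have in_A: "i \<in> A" if "j < i" "i < hlen m" "x m \<in> hist m ! i" for i
    using that branch_in_hexp[of i m] by (auto simp: A_def)
  have "A \<noteq> {}" using branch_moves_below[OF tr deep] by (auto simp: A_def)
  moreover have fin: "finite A" unfolding A_def by (rule finite_subset[of _ "{..<2 * hlen m}"]) auto
  ultimately have lA: "Min A \<in> A" and lmin: "\<And>i. i \<in> A \<Longrightarrow> Min A \<le> i" by auto
  define l where "l = Min A"
  have l: "j < l" "l < 2 * hlen m" "x (Suc m) \<in> hexp m ! l" using lA by (auto simp: A_def l_def)
  (* an earlier green node containing node l would contain the branch: below j it would
     cover node j (which is kept), j itself is not green, and above j it contradicts minimality *)
  have "\<not> (\<exists>i<l. hgreen m i \<and> hexp m ! l \<subseteq> hexp m ! i)"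
  proof
    assume "\<exists>i<l. hgreen m i \<and> hexp m ! l \<subseteq> hexp m ! i"
    then obtain i where i: "i < l" "hgreen m i" "hexp m ! l \<subseteq> hexp m ! i" by blast
    have ik: "i < hlen m" using i(2) by (simp add: green_def)
    have xi: "x (Suc m) \<in> hexp m ! i" using i(3) l(3) by blast
    consider "j < i" | "i = j" | "i < j" by linarith
    then show False
    proof cases
      case 1
      then have "i \<in> A" using ik xi by (simp add: A_def)
      then have "l \<le> i" using lmin by (simp add: l_def)
      then show False using i(1) by simp
    next
      case 2 then show False using i(2) not_green by simp
    next
      case 3
      have "x (Suc m) \<in> hexp m ! j" using branch_in_hexp[OF jk xj] .
      then have "hexp m ! j \<subseteq> hexp m ! i"
        using laminar_hexp[of m, unfolded laminar_def, rule_format, OF 3] jk xi by auto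
      then show False using kept_not_below_green[OF _ 3 i(2)] kept_upto by simp
    qed
  qed
  then have "hkept m l" using l(3) by (auto simp: kept_def)
  then show ?thesis using l in_A lmin by (auto simp: l_def)
qed

lemma depth_step:
  assumes tr: "tracking m j" and not_green: "\<not> hgreen m j" and deep: "deeper m j \<or> x m \<in> F"
  shows "deeper (Suc m) j"
    and "deeper m j \<Longrightarrow> depth (Suc m) j \<le> depth m j"
    and "deeper m j \<Longrightarrow> depth (Suc m) j = depth m j \<Longrightarrow> \<forall>i\<le>depth m j. hkept m i"
proof -
  obtain l where l: "j < l" "l < 2 * hlen m" "hkept m l" "x (Suc m) \<in> hexp m ! l"
    and l_min: "\<forall>i. j < i \<and> i < hlen m \<and> x m \<in> hist m ! i \<longrightarrow> l \<le> i"
    using tracking_successor[OF assms] by blast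
  have kept_upto: "\<forall>i\<le>j. hkept m i" using tr by (simp add: tracking_def)
  have p: "newpos m l < hlen (Suc m)" "hist (Suc m) ! newpos m l = hexp m ! l"
    using newpos_kept[OF l(3,2)] by auto
  have jp: "j < newpos m l" using newpos_gt[OF kept_upto l(1)] .
  show deeper: "deeper (Suc m) j" unfolding deeper_def using jp p l(4) by auto
  assume dm: "deeper m j"
  have chain: "depth (Suc m) j \<le> newpos m l" "newpos m l \<le> l" "l \<le> depth m j"
    using depth_le[OF jp p(1)] p(2) l(4) newpos_le l_min depth_props[OF dm] by auto
  then show "depth (Suc m) j \<le> depth m j" by linarith
  assume "depth (Suc m) j = depth m j"
  then have "newpos m l = l" "l = depth m j" using chain by linarith+
  then have "\<forall>i<depth m j. hkept m i" "hkept m (depth m j)" using newpos_eq_iff l(3) by auto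
  then show "\<forall>i\<le>depth m j. hkept m i" using le_less by blast
qed

(* If node j tracks the branch forever but is green only finitely often, then from some time
   on a strictly deeper node tracks the branch forever: every visit to F pushes the branch
   below j, and then its depth below j is nonincreasing, hence eventually constant. *)
lemma tracking_deeper:
  assumes tr: "\<forall>m\<ge>T. tracking m j" and not_green: "\<not> (\<exists>\<^sub>\<infinity>m. hgreen m j)"
    and acc: "\<exists>\<^sub>\<infinity>m. x m \<in> F"
  shows "\<exists>T' j'. j < j' \<and> (\<forall>m\<ge>T'. tracking m j')"
proof -
  obtain T0 where "\<forall>m\<ge>T0. \<not> hgreen m j" using not_green by (auto simp: not_INFM MOST_nat_le)
  then obtain T1 where T1: "\<forall>m\<ge>T1. tracking m j \<and> \<not> hgreen m j"
    using tr by (intro that[of "max T T0"]) auto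
  obtain s where s: "s \<ge> T1" "x s \<in> F" using acc unfolding INFM_nat_le by blast
  have deep: "deeper m j" if "Suc s \<le> m" for m
    using that
  proof (induction m rule: dec_induct)
    case base
    have "tracking s j" "\<not> hgreen s j" using T1 s(1) by auto
    then show ?case using depth_step(1) s(2) by blast
  next
    case (step n)
    have "tracking n j" "\<not> hgreen n j" using T1 s(1) step.hyps(1) by auto
    then show ?case using depth_step(1) step.IH by blast
  qed
  have "depth (Suc m) j \<le> depth m j" if "m \<ge> Suc s" for m
  proof -
    have "tracking m j" "\<not> hgreen m j" using T1 s(1) that by auto
    then show ?thesis using depth_step(2) deep[OF that] by blast
  qed
  then have "\<forall>m\<ge>Suc s. depth (Suc m) j \<le> depth m j" by blast
  from nonincreasing_eventually_const[OF this]
  obtain T2 where T2: "T2 \<ge> Suc s" "\<forall>m\<ge>T2. depth m j = depth T2 j" by blast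
  have "tracking m (depth T2 j)" if m: "m \<ge> T2" for m
  proof -
    have "depth (Suc m) j = depth T2 j" "depth m j = depth T2 j" using T2(2) m le_SucI by blast+
    then have eq: "depth (Suc m) j = depth m j" "depth m j = depth T2 j" by simp_all
    have dm: "deeper m j" using deep T2(1) m by simp
    have tm: "tracking m j" "\<not> hgreen m j" using T1 T2(1) s(1) m by auto
    have "\<forall>i\<le>depth m j. hkept m i" using depth_step(3)[OF tm _ dm eq(1)] dm by blast
    then show ?thesis using depth_props[OF dm] eq(2) unfolding tracking_def by simp
  qed
  moreover have "j < depth T2 j" using depth_props[OF deep[OF T2(1)]] by simp
  ultimately show ?thesis by blast
qed

(* Completeness: descend through tracking nodes; as the depth is bounded by N, some tracking
   node must turn green infinitely often. *)
theorem even_if_branch: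
  assumes acc: "\<exists>\<^sub>\<infinity>m. x m \<in> F"
  shows "even (Min limit_prios)"
proof -
  have "even (Min limit_prios)" if "\<forall>m\<ge>T. tracking m j" for T j
    using that
  proof (induction "N - j" arbitrary: T j rule: less_induct)
    case less
    show ?case
    proof (cases "\<exists>\<^sub>\<infinity>m. hgreen m j")
      case True then show ?thesis by (rule tracking_green_even[OF less.prems])
    next
      case False
      from tracking_deeper[OF less.prems False acc] obtain T' j' where
        j': "j < j'" "\<forall>m\<ge>T'. tracking m j'" by blast
      have "j' < N" using j'(2) hlen_bound[of T'] by (auto simp: tracking_def)
      then have "N - j' < N - j" using j'(1) by simp
      then show ?thesis using less.hyps j'(2) by blast
    qed
  qed
  then show ?thesis using root_tracking by blast
qed

end

subsection \<open>Ancestors and Koenig's lemma\<close>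

definition parent :: "nat \<Rightarrow> 'q \<Rightarrow> 'q" where
  "parent m y = (THE x. E m x y)"

lemma parent_eq: "E m x y \<Longrightarrow> parent m y = x"
  unfolding parent_def by (rule the_equality) (auto intro: parent_unique)

lemma parent_edge: "y \<in> S (Suc m) \<Longrightarrow> E m (parent m y) y"
  using parent_exists[of y m] parent_eq by metis

(* ancestor s e y: the ancestor in layer s of a state y of layer s + e. *)
fun ancestor :: "nat \<Rightarrow> nat \<Rightarrow> 'q \<Rightarrow> 'q" where
  "ancestor s 0 y = y"
| "ancestor s (Suc e) y = ancestor s e (parent (s + e) y)"

lemma ancestor_layer: "y \<in> S (s + e) \<Longrightarrow> ancestor s e y \<in> S s"
proof (induction e arbitrary: y)
  case (Suc e)
  have "y \<in> S (Suc (s + e))" using Suc.prems by simp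
  then have "parent (s + e) y \<in> S (s + e)" using parent_edge edge_source by blast
  then show ?case using Suc.IH by simp
qed simp

lemma ancestor_branch: "\<forall>i. E i (x i) (x (Suc i)) \<Longrightarrow> ancestor s e (x (s + e)) = x s"
proof (induction e)
  case (Suc e)
  have "parent (s + e) (x (s + Suc e)) = x (s + e)" using Suc.prems parent_eq by simp
  then show ?case using Suc by simp
qed simp

lemma ancestor_add: "ancestor s (d + e) y = ancestor s d (ancestor (s + d) e y)"
  by (induction e arbitrary: y) (simp_all add: add.assoc)

definition post_chain :: "nat \<Rightarrow> (nat \<Rightarrow> 'q set) \<Rightarrow> bool" where
  "post_chain t0 X \<longleftrightarrow> (\<forall>m\<ge>t0. X m \<noteq> {} \<and> X m \<subseteq> S m \<and> X (Suc m) = post m (X m))"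

definition persistent :: "(nat \<Rightarrow> 'q set) \<Rightarrow> nat \<Rightarrow> 'q \<Rightarrow> bool" where
  "persistent X m z \<longleftrightarrow> z \<in> X m \<and> (\<forall>e. \<exists>y\<in>X (m + e). ancestor m e y = z)"

context
  fixes t0 and X :: "nat \<Rightarrow> 'q set"
  assumes chain: "post_chain t0 X"
begin

lemma chain_finite: "m \<ge> t0 \<Longrightarrow> finite (X m)"
  using chain layer_finite finite_subset unfolding post_chain_def by blast

lemma chain_ancestor: "m \<ge> t0 \<Longrightarrow> y \<in> X (m + e) \<Longrightarrow> ancestor m e y \<in> X m"
proof (induction e arbitrary: y)
  case (Suc e)
  have "y \<in> post (m + e) (X (m + e))" using Suc.prems chain by (simp add: post_chain_def)
  then obtain z where "z \<in> X (m + e)" "E (m + e) z y" by (auto simp: post_def)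
  then show ?case using Suc.IH Suc.prems(1) parent_eq by simp
qed simp

lemma chain_ancestor_le:
  assumes "m \<ge> t0" "y \<in> X (m + e')" "ancestor m e' y = z" "e \<le> e'"
  shows "\<exists>y'\<in>X (m + e). ancestor m e y' = z"
proof -
  have "y \<in> X ((m + e) + (e' - e))" using assms(2,4) by simp
  then have "ancestor (m + e) (e' - e) y \<in> X (m + e)" using assms(1) chain_ancestor by simp
  moreover have "ancestor m e (ancestor (m + e) (e' - e) y) = z"
    using ancestor_add[of m e "e' - e" y] assms(3,4) by simp
  ultimately show ?thesis by blast
qed

(* Finitely many states, each without descendants at some distance: then the maximal such
   distance would leave X (m + E) without ancestors, contradicting nonemptiness. *)
lemma persistent_among:
  assumes m: "m \<ge> t0" and A: "A \<subseteq> X m" "finite A"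
    and covers: "\<forall>e. \<exists>y\<in>X (m + e). ancestor m e y \<in> A"
  shows "\<exists>z\<in>A. persistent X m z"
proof (rule ccontr)
  assume "\<not> (\<exists>z\<in>A. persistent X m z)"
  then have "\<forall>z\<in>A. \<exists>e. \<not> (\<exists>y\<in>X (m + e). ancestor m e y = z)"
    using A(1) unfolding persistent_def by blast
  from bchoice[OF this] obtain ez where ez: "\<forall>z\<in>A. \<not> (\<exists>y\<in>X (m + ez z). ancestor m (ez z) y = z)"
    by blast
  define e0 where "e0 = Max (insert 0 (ez ` A))"
  obtain y where y: "y \<in> X (m + e0)" "ancestor m e0 y \<in> A" using covers by blast
  have "ez z \<le> e0" if "z \<in> A" for z unfolding e0_def using that A(2) by (intro Max_ge) auto
  then have "ez (ancestor m e0 y) \<le> e0" using y(2) by blast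
  from chain_ancestor_le[OF m y(1) refl this] ez y(2) show False by blast
qed

lemma persistent_exists:
  assumes m: "m \<ge> t0"
  shows "\<exists>z. persistent X m z"
proof -
  have "\<exists>y\<in>X (m + e). ancestor m e y \<in> X m" for e
  proof -
    have "X (m + e) \<noteq> {}" using chain m unfolding post_chain_def by simp
    then show ?thesis using chain_ancestor[OF m] by blast
  qed
  then show ?thesis using persistent_among[OF m order_refl chain_finite[OF m]] by blast
qed

lemma persistent_child:
  assumes m: "m \<ge> t0" and z: "persistent X m z"
  shows "\<exists>c. persistent X (Suc m) c \<and> E m z c"
proof -
  define C where "C = {c \<in> X (Suc m). parent m c = z}"
  have "\<forall>e. \<exists>y\<in>X (Suc m + e). ancestor (Suc m) e y \<in> C"
  proof
    fix e
    obtain y where y: "y \<in> X (m + Suc e)" "ancestor m (Suc e) y = z" using z unfolding persistent_def by blast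
    have "ancestor (Suc m) e y \<in> X (Suc m)" using chain_ancestor[of "Suc m" y e] y(1) m by simp
    moreover have "parent m (ancestor (Suc m) e y) = z"
      using ancestor_add[of m 1 e y] y(2) by simp
    ultimately show "\<exists>y\<in>X (Suc m + e). ancestor (Suc m) e y \<in> C" using y(1) by (auto simp: C_def)
  qed
  then obtain c where c: "c \<in> C" "persistent X (Suc m) c"
    using persistent_among[of "Suc m" C] chain_finite[of "Suc m"] m by (auto simp: C_def)
  have "Suc m \<ge> t0" using m by simp
  then have "X (Suc m) \<subseteq> S (Suc m)" using chain unfolding post_chain_def by blast
  then have "c \<in> S (Suc m)" using c(1) by (auto simp: C_def)
  then have "E m z c" using parent_edge c(1) by (auto simp: C_def)
  then show ?thesis using c(2) by blast
qed

lemma chain_branch: "\<exists>x. \<forall>m\<ge>t0. x m \<in> X m \<and> E m (x m) (x (Suc m))"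
proof -
  have "\<exists>z. persistent X (t0 + 0) z" using persistent_exists by simp
  moreover have "\<exists>c. persistent X (t0 + Suc n) c \<and> E (t0 + n) z c" if "persistent X (t0 + n) z" for n z
    using persistent_child[OF _ that] by simp
  ultimately obtain f where f: "\<forall>n. persistent X (t0 + n) (f n) \<and> E (t0 + n) (f n) (f (Suc n))"
    using dependent_nat_choice[of "\<lambda>n z. persistent X (t0 + n) z" "\<lambda>n z c. E (t0 + n) z c"] by blast
  have "f (m - t0) \<in> X m \<and> E m (f (m - t0)) (f (Suc m - t0))" if "m \<ge> t0" for m
  proof -
    have "persistent X (t0 + (m - t0)) (f (m - t0))" "E (t0 + (m - t0)) (f (m - t0)) (f (Suc (m - t0)))"
      using f by blast+
    moreover have "t0 + (m - t0) = m" "Suc (m - t0) = Suc m - t0" using that by auto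
    ultimately show ?thesis unfolding persistent_def by simp
  qed
  then show ?thesis by (intro exI[of _ "\<lambda>m. f (m - t0)"]) simp
qed

end

lemma branch_extend_back:
  assumes x0: "\<forall>m\<ge>t0. E m (x0 m) (x0 (Suc m))" "x0 t0 \<in> S t0"
  shows "\<exists>x. (\<forall>m. E m (x m) (x (Suc m))) \<and> (\<forall>m\<ge>t0. x m = x0 m)"
proof -
  define x where "x m = (if m < t0 then ancestor m (t0 - m) (x0 t0) else x0 m)" for m
  have "E m (x m) (x (Suc m))" for m
  proof (cases "m < t0")
    case True
    have layer: "x (Suc m) \<in> S (Suc m)"
    proof (cases "Suc m < t0")
      case True
      have "x0 t0 \<in> S (Suc m + (t0 - Suc m))" using x0(2) True by simp
      then show ?thesis using ancestor_layer True by (simp add: x_def)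
    next
      case False
      then have "Suc m = t0" using \<open>m < t0\<close> by simp
      then show ?thesis using x0(2) by (simp add: x_def)
    qed
    have "x m = ancestor m (1 + (t0 - Suc m)) (x0 t0)" using True by (simp add: x_def Suc_diff_Suc)
    also have "\<dots> = parent m (x (Suc m))"
    proof (cases "Suc m < t0")
      case False
      then have "Suc m = t0" using True by simp
      then show ?thesis unfolding ancestor_add by (simp add: x_def)
    qed (use ancestor_add[of m 1 "t0 - Suc m" "x0 t0"] in \<open>simp add: x_def\<close>)
    finally show ?thesis using parent_edge[OF layer] by simp
  next
    case False
    then show ?thesis using x0(1) by (simp add: x_def)
  qed
  moreover have "\<forall>m\<ge>t0. x m = x0 m" by (simp add: x_def)
  ultimately show ?thesis by blast
qed


subsection \<open>An even limit priority yields an accepting branch\<close>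

lemma even_limit_settled:
  assumes even: "even (Min limit_prios)"
  shows "\<exists>r t0. (\<exists>\<^sub>\<infinity>m. hgreen m r) \<and> hgreen t0 r \<and> (\<forall>m\<ge>t0. r < hlen m \<and> (\<forall>i\<le>r. hkept m i))"
proof -
  define p where "p = Min limit_prios"
  have "\<forall>v<p. \<not> (\<exists>\<^sub>\<infinity>m. prio m = v)"
  proof (intro allI impI notI)
    fix v assume "v < p" "\<exists>\<^sub>\<infinity>m. prio m = v"
    then have "v \<in> limit_prios" by (simp add: limit_prios_def)
    then show False using min_limit_prio(2) \<open>v < p\<close> p_def by fastforce
  qed
  from eventually_lower_bound[OF this] obtain T where T: "\<forall>m\<ge>T. p \<le> prio m" by blast
  have p_inf: "\<exists>\<^sub>\<infinity>m. prio m = p" using min_limit_prio(1) by (simp add: p_def limit_prios_def)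
  then obtain m0 where "prio m0 = p" using INFM_EX by blast
  then obtain r where r: "p = 2*r+2" using prio_even even unfolding p_def by metis
  have green_inf: "\<exists>\<^sub>\<infinity>m. hgreen m r"
  proof (rule INFM_mono[OF p_inf])
    fix m assume "prio m = p"
    then obtain i where "hgreen m i" "prio m = 2*i+2" using prio_even r by force
    then show "hgreen m r" using \<open>prio m = p\<close> r by simp
  qed
  have kept_after: "hkept m i" if "m \<ge> T" "i \<le> r" "i < hlen m" for m i
    using prio_le_removed[OF that(3)] T that(1,2) r by force
  have "\<exists>\<^sub>\<infinity>m. hgreen m r \<and> T \<le> m" using green_inf by (rule INFM_conjI[OF _ MOST_ge_nat])
  then obtain t0 where t0: "hgreen t0 r" "T \<le> t0" using INFM_EX by blast
  have r_len: "r < hlen m" if "t0 \<le> m" for m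
    using that
  proof (induction m rule: dec_induct)
    case base then show ?case using t0(1) by (simp add: green_def)
  next
    case (step n)
    have "\<forall>i\<le>r. hkept n i" using kept_after step t0(2) by simp
    then have "newpos n r = r" "hkept n r" using newpos_eq_iff by auto
    then show ?case using newpos_kept step.IH by fastforce
  qed
  have "\<forall>m\<ge>t0. r < hlen m \<and> (\<forall>i\<le>r. hkept m i)"
  proof (intro allI impI)
    fix m assume m: "t0 \<le> m"
    then show "r < hlen m \<and> (\<forall>i\<le>r. hkept m i)" using kept_after r_len[OF m] t0(2) by auto
  qed
  then show ?thesis using green_inf t0(1) by blast
qed

definition F_since :: "nat \<Rightarrow> nat \<Rightarrow> 'q \<Rightarrow> bool" where
  "F_since g m y \<longleftrightarrow> (\<exists>s e. g < s \<and> s + e = m \<and> ancestor s e y \<in> F)"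

context
  fixes r t0
  assumes settled: "\<forall>m\<ge>t0. r < hlen m \<and> (\<forall>i\<le>r. hkept m i)"
begin

lemma settled_step: "m \<ge> t0 \<Longrightarrow> hist (Suc m) ! r = post m (hist m ! r)"
  using settled newpos_eq_iff[of m r] newpos_kept[of m r] hexp_old[of r m] by auto

lemma settled_chain: "post_chain t0 (\<lambda>m. hist m ! r)"
  using settled settled_step hist_nonempty hist_subset unfolding post_chain_def by blast

lemma settled_descendant_source:
  assumes m: "m \<ge> t0" and j: "r < j" "j < hlen (Suc m)" "hist (Suc m) ! j \<subseteq> hist (Suc m) ! r"
  shows "\<exists>l. r < l \<and> l < 2 * hlen m \<and> hkept m l \<and> hist (Suc m) ! j = hexp m ! l \<and>
             hexp m ! l \<subseteq> hexp m ! r"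
proof -
  obtain l where l: "hkept m l" "l < 2 * hlen m" "newpos m l = j" "hist (Suc m) ! j = hexp m ! l"
    using hist_Suc_source[OF j(2)] by blast
  have pos_r: "newpos m r = r" using settled m newpos_eq_iff by auto
  have "r < l"
  proof (rule ccontr)
    assume "\<not> r < l"
    then have "newpos m l \<le> newpos m r" by (intro newpos_mono) simp
    then show False using l(3) pos_r j(1) by simp
  qed
  moreover have "hist (Suc m) ! r = hexp m ! r" using settled_step[OF m] hexp_old settled m by simp
  ultimately show ?thesis using l j(3) by auto
qed

lemma settled_old_descendant:
  assumes m: "m \<ge> t0" and l: "r < l" "l < hlen m" "hexp m ! l \<noteq> {}" "hexp m ! l \<subseteq> hexp m ! r"
  shows "hist m ! l \<subseteq> hist m ! r"
proof -
  have "hist m ! l \<subseteq> hist m ! r \<or> hist m ! r \<inter> hist m ! l = {}"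
    using hist_invariant[of m] l(1,2) unfolding hist_inv_def laminar_def by blast
  moreover have "hist m ! r \<inter> hist m ! l \<noteq> {}"
  proof
    assume "hist m ! r \<inter> hist m ! l = {}"
    then have "post m (hist m ! r) \<inter> post m (hist m ! l) = {}"
      by (rule succ_map_disjoint[OF post_succ_map])
    then show False using l(3,4) hexp_old[OF l(2)] hexp_old[of r m] settled m by auto
  qed
  ultimately show ?thesis by blast
qed

(* One step of the induction below: a state in a node l > r below r of the expansion has an
   F-ancestor after g, either through its parent in an old node (induction hypothesis) or
   because its parent is a fresh, hence accepting, state. *)
lemma F_since_step:
  assumes m: "t0 \<le> m" "Suc g \<le> m"
    and IH: "\<forall>j. r < j \<and> j < hlen m \<and> hist m ! j \<subseteq> hist m ! r \<longrightarrow> (\<forall>y\<in>hist m ! j. F_since g m y)"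
    and l: "r < l" "l < 2 * hlen m" "hexp m ! l \<subseteq> hexp m ! r" "y \<in> hexp m ! l"
  shows "F_since g (Suc m) y"
proof (cases "l < hlen m")
  case True
  then obtain z where z: "z \<in> hist m ! l" "E m z y" using l(4) hexp_old by (auto simp: post_def)
  have "hist m ! l \<subseteq> hist m ! r"
    using settled_old_descendant[OF m(1) l(1) True _ l(3)] l(4) by blast
  then obtain s e where se: "g < s" "s + e = m" "ancestor s e z \<in> F"
    using IH l(1) True z(1) unfolding F_since_def by blast
  have "ancestor s (Suc e) y = ancestor s e z" using parent_eq[OF z(2)] se(2) by simp
  then show ?thesis unfolding F_since_def using se by (intro exI[of _ s] exI[of _ "Suc e"]) simp
next
  case False
  then obtain i where i: "l = hlen m + i" "i < hlen m" using l(2) by (intro that[of "l - hlen m"]) auto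
  then obtain z where z: "z \<in> fresh F (hist m) i" "E m z y"
    using l(4) hexp_new by (auto simp: post_def)
  have "z \<in> F" using fresh_subset(2)[of F "hist m" i] z(1) by blast
  then have "ancestor m (Suc 0) y \<in> F" using parent_eq[OF z(2)] by simp
  then show ?thesis unfolding F_since_def using m(2) by (intro exI[of _ m] exI[of _ "Suc 0"]) simp
qed

(* After r turns green at time g, every state in a node below r has an F-ancestor after g:
   right after g all nodes below r were collapsed, and new ones only arise from F. *)
lemma below_r_F_since:
  assumes g: "t0 \<le> g" "hgreen g r" and m: "Suc g \<le> m"
  shows "\<forall>j. r < j \<and> j < hlen m \<and> hist m ! j \<subseteq> hist m ! r \<longrightarrow> (\<forall>y\<in>hist m ! j. F_since g m y)"
  using m
proof (induction m rule: dec_induct)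
  case base
  show ?case
  proof (intro allI impI)
    fix j assume "r < j \<and> j < hlen (Suc g) \<and> hist (Suc g) ! j \<subseteq> hist (Suc g) ! r"
    then obtain l where "r < l" "hkept g l" "hexp g ! l \<subseteq> hexp g ! r"
      using settled_descendant_source[OF g(1)] by blast
    then show "\<forall>y\<in>hist (Suc g) ! j. F_since g (Suc g) y" using kept_not_below_green g(2) by blast
  qed
next
  case (step n)
  show ?case
  proof (intro allI impI ballI)
    fix j y assume j: "r < j \<and> j < hlen (Suc n) \<and> hist (Suc n) ! j \<subseteq> hist (Suc n) ! r"
      and y: "y \<in> hist (Suc n) ! j"
    have n: "t0 \<le> n" using step.hyps g(1) by simp
    obtain l where "r < l" "l < 2 * hlen n" "hist (Suc n) ! j = hexp n ! l" "hexp n ! l \<subseteq> hexp n ! r"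
      using settled_descendant_source[OF n] j by blast
    then show "F_since g (Suc n) y" using F_since_step[OF n step.hyps(1) step.IH] y by simp
  qed
qed

(* When r turns green again at t > g, node r is covered by its descendants, so every state
   of node r at t+1 has an F-ancestor after g. *)
lemma green_again_F_since:
  assumes g: "t0 \<le> g" "hgreen g r" and t: "Suc g \<le> t" "hgreen t r" and y: "y \<in> hist (Suc t) ! r"
  shows "F_since g (Suc t) y"
proof -
  have t0t: "t0 \<le> t" using g(1) t(1) by simp
  have "hist (Suc t) ! r = hexp t ! r" using settled_step[OF t0t] hexp_old settled t0t by simp
  also have "\<dots> = covered (hexp t) r" using t(2) by (simp add: green_def)
  finally obtain l where l: "r < l" "l < 2 * hlen t" "hexp t ! l \<subseteq> hexp t ! r" "y \<in> hexp t ! l"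
    using y unfolding covered_def by auto
  show ?thesis by (rule F_since_step[OF t0t t(1) below_r_F_since[OF g t(1)] l])
qed

end

(* Soundness: follow node r by Koenig's lemma; between two green times of r the branch
   passes through F. *)
theorem branch_if_even:
  assumes "even (Min limit_prios)"
  shows "\<exists>x. (\<forall>m. E m (x m) (x (Suc m))) \<and> (\<exists>\<^sub>\<infinity>m. x m \<in> F)"
proof -
  obtain r t0 where green_inf: "\<exists>\<^sub>\<infinity>m. hgreen m r" and t0: "hgreen t0 r"
    and settled: "\<forall>m\<ge>t0. r < hlen m \<and> (\<forall>i\<le>r. hkept m i)"
    using even_limit_settled[OF assms] by blast
  have chain: "post_chain t0 (\<lambda>m. hist m ! r)" by (rule settled_chain[OF settled])
  obtain x0 where x0: "\<forall>m\<ge>t0. x0 m \<in> hist m ! r \<and> E m (x0 m) (x0 (Suc m))"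
    using chain_branch[OF chain] by blast
  have "x0 t0 \<in> S t0" using x0 chain unfolding post_chain_def by blast
  then obtain x where x: "\<forall>m. E m (x m) (x (Suc m))" "\<forall>m\<ge>t0. x m = x0 m"
    using branch_extend_back x0 by blast
  have "\<exists>n\<ge>g0. x n \<in> F" for g0
  proof -
    have "\<exists>\<^sub>\<infinity>m. hgreen m r \<and> max g0 t0 \<le> m" using green_inf by (rule INFM_conjI[OF _ MOST_ge_nat])
    then obtain g where g: "hgreen g r" "max g0 t0 \<le> g" using INFM_EX by blast
    have "\<exists>\<^sub>\<infinity>m. hgreen m r \<and> Suc g \<le> m" using green_inf by (rule INFM_conjI[OF _ MOST_ge_nat])
    then obtain t where t: "hgreen t r" "Suc g \<le> t" using INFM_EX by blast
    have "Suc t \<ge> t0" using g(2) t(2) by simp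
    then have "x (Suc t) \<in> hist (Suc t) ! r" using x(2) x0 by (simp del: hist.simps)
    then obtain s e where se: "g < s" "s + e = Suc t" "ancestor s e (x (Suc t)) \<in> F"
      using green_again_F_since[OF settled _ g(1) t(2,1)] g(2) unfolding F_since_def by fastforce
    then have "x s \<in> F" using ancestor_branch[OF x(1), of s e] by simp
    then show ?thesis using se(1) g(2) by (intro exI[of _ s]) simp
  qed
  then show ?thesis using x(1) unfolding INFM_nat_le by blast
qed

theorem even_iff_branch:
  "even (Min limit_prios) \<longleftrightarrow> (\<exists>x. (\<forall>m. E m (x m) (x (Suc m))) \<and> (\<exists>\<^sub>\<infinity>m. x m \<in> F))"
  using branch_if_even even_if_branch by blast

end

section \<open>Obligation counters\<close>

fun gap :: "(nat \<Rightarrow> 'q) \<Rightarrow> 'q set \<Rightarrow> nat \<Rightarrow> nat" where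
  "gap p G 0 = (if p 0 \<in> G then 0 else 1)"
| "gap p G (Suc i) = (if p (Suc i) \<in> G then 0 else Suc (gap p G i))"

lemma gap_suffix: "u < gap p G i \<Longrightarrow> u \<le> i \<and> p (i - u) \<notin> G"
proof (induction i arbitrary: u)
  case (Suc i)
  show ?case
  proof (cases u)
    case (Suc u')
    then show ?thesis using Suc.prems Suc.IH[of u'] by (simp split: if_splits)
  qed (use Suc.prems in \<open>simp split: if_splits\<close>)
qed (simp split: if_splits)

lemma gap_grows: "\<forall>m\<in>{i..<i+b}. p m \<notin> G \<Longrightarrow> t < b \<Longrightarrow> t + 1 \<le> gap p G (i + t)"
proof (induction t)
  case 0 then show ?case by (cases i) simp_all
qed simp

lemma infix_cond_iff_gap: "infix_cond p G b \<longleftrightarrow> (\<forall>i. gap p G i < b)"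
proof
  assume inf: "infix_cond p G b"
  show "\<forall>i. gap p G i < b"
  proof (rule ccontr)
    assume "\<not> (\<forall>i. gap p G i < b)"
    then obtain i where i: "b \<le> gap p G i" by (auto simp: not_less)
    obtain m0 where "m0 \<in> {0..<0 + b}" using inf unfolding infix_cond_def by blast
    then have "b > 0" by simp
    then have bi: "b - 1 \<le> i" using gap_suffix[of "b - 1" p G i] i by simp
    have "\<exists>m\<in>{i + 1 - b..<(i + 1 - b) + b}. p m \<in> G" using inf by (simp only: infix_cond_def)
    then obtain m where m: "i + 1 - b \<le> m" "m < i + 1" "p m \<in> G" using bi by auto
    have "i - m < gap p G i" using m bi i by linarith
    from gap_suffix[OF this] have "p (i - (i - m)) \<notin> G" by simp
    then show False using m by simp
  qed
next
  assume bounded: "\<forall>i. gap p G i < b"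
  show "infix_cond p G b" unfolding infix_cond_def
  proof (rule ccontr)
    assume "\<not> (\<forall>i. \<exists>m\<in>{i..<i + b}. p m \<in> G)"
    then obtain i where i: "\<forall>m\<in>{i..<i+b}. p m \<notin> G" by blast
    have "b > 0" using bounded by (metis gr_zeroI not_less_zero)
    then have "b \<le> gap p G (i + (b - 1))" using gap_grows[OF i, of "b - 1"] by simp
    then show False using bounded by (metis not_less)
  qed
qed

section \<open>The deterministic automaton\<close>

definition live :: "('q \<times> 'a \<times> 'q) set \<Rightarrow> 'q \<Rightarrow> bool" where
  "live Delta q \<longleftrightarrow> (\<exists>r u. r 0 = q \<and> (\<forall>i. (r i, u i, r (Suc i)) \<in> Delta))"

(* Counter maps assign to each obligation the current gap; they are extensional on Obl. *)
definition count_init :: "('q set \<times> nat) set \<Rightarrow> ('q set \<times> nat \<Rightarrow> nat)" where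
  "count_init Obl = (\<lambda>ob. if ob \<in> Obl then 0 else undefined)"

definition count_step :: "('q set \<times> nat) set \<Rightarrow> ('q set \<times> nat \<Rightarrow> nat) \<Rightarrow> 'q \<Rightarrow> ('q set \<times> nat \<Rightarrow> nat)" where
  "count_step Obl c y = (\<lambda>ob. if ob \<in> Obl then (if y \<in> fst ob then 0 else Suc (c ob)) else undefined)"

definition counts_ok :: "('q set \<times> nat) set \<Rightarrow> ('q set \<times> nat \<Rightarrow> nat) \<Rightarrow> bool" where
  "counts_ok Obl c \<longleftrightarrow> (\<forall>ob\<in>Obl. c ob < snd ob)"

definition root :: "'q set list \<Rightarrow> 'q set" where
  "root L = (if L = [] then {} else L ! 0)"

locale obligation_automaton =
  fixes Q :: "'q set" and Sig :: "'a set" and Q0 :: "'q set"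
    and Delta :: "('q \<times> 'a \<times> 'q) set" and F :: "'q set"
    and Obl :: "('q set \<times> nat) set"
  assumes wf: "buchi_wf Q Sig Q0 Delta F"
    and nc: "non_confluent Q0 Delta"
    and finite_Obl: "finite Obl"
    and Obl_valid: "\<forall>(G, b)\<in>Obl. G \<subseteq> Q \<and> b > 0"
begin

abbreviation "n \<equiv> card Q"

lemma finite_Q: "finite Q" using wf by (simp add: buchi_wf_def)

lemma Q0_subset: "Q0 \<subseteq> Q" using wf by (simp add: buchi_wf_def)

lemma Delta_subset: "(x, a, y) \<in> Delta \<Longrightarrow> x \<in> Q \<and> a \<in> Sig \<and> y \<in> Q"
  using wf by (auto simp: buchi_wf_def)

fun counters :: "(nat \<Rightarrow> 'q) \<Rightarrow> nat \<Rightarrow> ('q set \<times> nat \<Rightarrow> nat)" where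
  "counters p 0 = count_step Obl (count_init Obl) (p 0)"
| "counters p (Suc i) = count_step Obl (counters p i) (p (Suc i))"

definition valid_prefix :: "(nat \<Rightarrow> 'a) \<Rightarrow> nat \<Rightarrow> (nat \<Rightarrow> 'q) \<Rightarrow> bool" where
  "valid_prefix w m p \<longleftrightarrow> p 0 \<in> Q0 \<and> (\<forall>i<m. (p i, w i, p (Suc i)) \<in> Delta) \<and>
     (\<forall>i\<le>m. live Delta (p i)) \<and> (\<forall>i\<le>m. counts_ok Obl (counters p i))"

definition reach :: "(nat \<Rightarrow> 'a) \<Rightarrow> nat \<Rightarrow> 'q set" where
  "reach w m = {y. \<exists>p. valid_prefix w m p \<and> p m = y}"

definition reach_edge :: "(nat \<Rightarrow> 'a) \<Rightarrow> nat \<Rightarrow> 'q \<Rightarrow> 'q \<Rightarrow> bool" where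
  "reach_edge w m x y \<longleftrightarrow> (\<exists>p. valid_prefix w (Suc m) p \<and> p m = x \<and> p (Suc m) = y)"

lemma counters_cong: "\<forall>j\<le>i. p j = p' j \<Longrightarrow> counters p i = counters p' i"
  by (induction i) auto

lemma valid_prefix_cong: "\<forall>j\<le>m. p j = p' j \<Longrightarrow> valid_prefix w m p \<Longrightarrow> valid_prefix w m p'"
proof -
  assume eq: "\<forall>j\<le>m. p j = p' j" and v: "valid_prefix w m p"
  have "\<forall>i\<le>m. counters p i = counters p' i" using eq by (intro allI impI counters_cong) auto
  then show ?thesis using eq v unfolding valid_prefix_def by auto
qed

lemma valid_prefix_mono: "valid_prefix w m p \<Longrightarrow> m' \<le> m \<Longrightarrow> valid_prefix w m' p"
  unfolding valid_prefix_def by auto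

lemma valid_prefix_extend:
  assumes "valid_prefix w m p" "(p m, w m, y) \<in> Delta" "live Delta y"
    "counts_ok Obl (count_step Obl (counters p m) y)"
  shows "valid_prefix w (Suc m) (p(Suc m := y))"
proof -
  let ?p = "p(Suc m := y)"
  have same: "counters ?p i = counters p i" if "i \<le> m" for i using that by (intro counters_cong) auto
  have step: "counters ?p (Suc m) = count_step Obl (counters p m) y" using same[of m] by simp
  show ?thesis unfolding valid_prefix_def
  proof (intro conjI allI impI)
    show "?p 0 \<in> Q0" using assms(1) by (simp add: valid_prefix_def)
  next
    fix i assume "i < Suc m"
    then show "(?p i, w i, ?p (Suc i)) \<in> Delta" using assms(1,2) by (cases "i = m") (auto simp: valid_prefix_def)
  next
    fix i assume "i \<le> Suc m"
    then show "live Delta (?p i)" using assms(1,3) by (cases "i = Suc m") (auto simp: valid_prefix_def)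
  next
    fix i assume "i \<le> Suc m"
    then show "counts_ok Obl (counters ?p i)"
      using same step assms(1,4) by (cases "i = Suc m") (auto simp: valid_prefix_def)
  qed
qed

lemma valid_prefix_run:
  assumes q: "valid_prefix w m q" and r: "r 0 = q m" "\<forall>i. (r i, u i, r (Suc i)) \<in> Delta"
  shows "buchi_run Q0 Delta (\<lambda>i. if i < m then w i else u (i - m)) (\<lambda>i. if i \<le> m then q i else r (i - m))"
  unfolding buchi_run_def
proof (intro conjI allI)
  show "(if 0 \<le> m then q 0 else r (0 - m)) \<in> Q0" using q by (simp add: valid_prefix_def)
next
  fix i
  consider "i < m" | "i = m" | "m < i" by linarith
  then show "(if i \<le> m then q i else r (i - m), if i < m then w i else u (i - m),
              if Suc i \<le> m then q (Suc i) else r (Suc i - m)) \<in> Delta"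
  proof cases
    case 1 then show ?thesis using q by (simp add: valid_prefix_def)
  next
    case 2 then show ?thesis using r spec[OF r(2), of 0] by simp
  next
    case 3 then show ?thesis using r(2) by (simp add: Suc_diff_le)
  qed
qed

(* Non-confluence: two valid prefixes ending in the same state agree everywhere, since both
   extend to runs on a common word by the same continuation. *)
lemma valid_prefix_unique:
  assumes v: "valid_prefix w m p" "valid_prefix w m p'" and eq: "p m = p' m"
  shows "\<forall>i\<le>m. p i = p' i"
proof -
  have "live Delta (p m)" using v(1) by (simp add: valid_prefix_def)
  then obtain r u where r: "r 0 = p m" "\<forall>i. (r i, u i, r (Suc i)) \<in> Delta" by (auto simp: live_def)
  let ?w = "\<lambda>i. if i < m then w i else u (i - m)"
  let ?run = "\<lambda>q i. if i \<le> m then q i else r (i - m)"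
  have "buchi_run Q0 Delta ?w (?run p)" "buchi_run Q0 Delta ?w (?run p')"
    using valid_prefix_run[OF v(1) r] valid_prefix_run[OF v(2) _ r(2)] r(1) eq by simp_all
  moreover have "?run p m = ?run p' m" using eq by simp
  ultimately have "\<forall>i<m. ?run p i = ?run p' i" using nc unfolding non_confluent_def by blast
  then show ?thesis using eq by (auto simp: le_less)
qed

lemma reach_subset: "reach w m \<subseteq> Q"
proof
  fix y assume "y \<in> reach w m"
  then obtain p where p: "valid_prefix w m p" "p m = y" by (auto simp: reach_def)
  show "y \<in> Q"
  proof (cases m)
    case 0 then show ?thesis using p Q0_subset by (auto simp: valid_prefix_def)
  next
    case (Suc m')
    then have "(p m', w m', p m) \<in> Delta" using p(1) by (simp add: valid_prefix_def)
    then show ?thesis using Delta_subset p(2) by blast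
  qed
qed

lemma reach_forest: "layered_forest (reach w) (reach_edge w) n"
proof
  fix m
  show "finite (reach w m)" using reach_subset finite_Q finite_subset by blast
  show "card (reach w m) \<le> n" using reach_subset finite_Q by (rule card_mono[rotated])
next
  fix m x y assume "reach_edge w m x y"
  then obtain p where p: "valid_prefix w (Suc m) p" "p m = x" "p (Suc m) = y"
    by (auto simp: reach_edge_def)
  have "valid_prefix w m p" using valid_prefix_mono[OF p(1)] by simp
  then show "x \<in> reach w m" using p(2) by (auto simp: reach_def)
  show "y \<in> reach w (Suc m)" using p by (auto simp: reach_def)
next
  fix m y assume "y \<in> reach w (Suc m)"
  then show "\<exists>x. reach_edge w m x y" by (auto simp: reach_edge_def reach_def)
next
  fix m x y x' assume "reach_edge w m x y" "reach_edge w m x' y"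
  then obtain p p' where p: "valid_prefix w (Suc m) p" "p m = x" "p (Suc m) = y"
    and p': "valid_prefix w (Suc m) p'" "p' m = x'" "p' (Suc m) = y" by (auto simp: reach_edge_def)
  from valid_prefix_unique[OF p(1) p'(1)] p(3) p'(3) have "p m = p' m" by simp
  then show "x = x'" using p(2) p'(2) by simp
qed

end

context obligation_automaton
begin

text \<open>A state of the deterministic automaton is a triple (L, c, p): a history list over the
  current layer, the counter map of every current state (trivial outside the layer), and the
  priority of the step that led to it.\<close>

type_synonym ('b, 'c) dstate = "'b set list \<times> ('b \<Rightarrow> 'c set \<times> nat \<Rightarrow> nat) \<times> nat"

(* The forest edges recomputed from the root of L and the counter map c. *)
definition dedge :: "'q set list \<Rightarrow> ('q \<Rightarrow> 'q set \<times> nat \<Rightarrow> nat) \<Rightarrow> 'a \<Rightarrow> 'q \<Rightarrow> 'q \<Rightarrow> bool" where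
  "dedge L c a x y \<longleftrightarrow> x \<in> root L \<and> (x, a, y) \<in> Delta \<and> live Delta y \<and>
     counts_ok Obl (count_step Obl (c x) y)"

definition dpost :: "'q set list \<Rightarrow> ('q \<Rightarrow> 'q set \<times> nat \<Rightarrow> nat) \<Rightarrow> 'a \<Rightarrow> 'q set \<Rightarrow> 'q set" where
  "dpost L c a X = {y. \<exists>x\<in>X. dedge L c a x y}"

definition dstep :: "('q, 'q) dstate \<Rightarrow> 'a \<Rightarrow> ('q, 'q) dstate" where
  "dstep s a = (case s of (L, c, p) \<Rightarrow>
     (hnext F (dpost L c a) L,
      (\<lambda>y. if y \<in> dpost L c a (root L) then count_step Obl (c (SOME x. dedge L c a x y)) y
           else if y \<in> Q then count_init Obl else undefined),
      hprio F (dpost L c a) n L))"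

definition init_states :: "'q set" where
  "init_states = {y \<in> Q0. live Delta y \<and> counts_ok Obl (count_step Obl (count_init Obl) y)}"

definition dinit :: "('q, 'q) dstate" where
  "dinit = ((if init_states = {} then [] else [init_states]),
           (\<lambda>y. if y \<in> init_states then count_step Obl (count_init Obl) y
                else if y \<in> Q then count_init Obl else undefined), 2*n+1)"

abbreviation drun :: "(nat \<Rightarrow> 'a) \<Rightarrow> nat \<Rightarrow> ('q, 'q) dstate" where
  "drun w \<equiv> dpa_run dinit dstep w"

abbreviation "fhist w m \<equiv> layered_forest.hist (reach w) (reach_edge w) F m"
abbreviation "fprio w m \<equiv> layered_forest.prio (reach w) (reach_edge w) F n m"
abbreviation "fpost w m \<equiv> layered_forest.post (reach_edge w) m"

lemma root_fhist: "root (fhist w m) = reach w m"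
  using layered_forest.hist_invariant[OF reach_forest] unfolding hist_inv_def root_def by auto

lemma init_states_eq: "init_states = reach w 0"
proof
  show "init_states \<subseteq> reach w 0"
  proof
    fix y assume "y \<in> init_states"
    then have "valid_prefix w 0 (\<lambda>_. y)" by (simp add: init_states_def valid_prefix_def)
    then show "y \<in> reach w 0" by (auto simp: reach_def)
  qed
  show "reach w 0 \<subseteq> init_states" by (auto simp: reach_def init_states_def valid_prefix_def)
qed

definition counter_inv :: "(nat \<Rightarrow> 'a) \<Rightarrow> nat \<Rightarrow> ('q \<Rightarrow> 'q set \<times> nat \<Rightarrow> nat) \<Rightarrow> bool" where
  "counter_inv w m c \<longleftrightarrow> (\<forall>p. valid_prefix w m p \<longrightarrow> c (p m) = counters p m) \<and>
     (\<forall>y. y \<notin> reach w m \<longrightarrow> c y = (if y \<in> Q then count_init Obl else undefined))"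

lemma dedge_iff_reach_edge:
  assumes inv: "counter_inv w m c"
  shows "dedge (fhist w m) c (w m) x y \<longleftrightarrow> reach_edge w m x y"
proof
  assume e: "dedge (fhist w m) c (w m) x y"
  then have "x \<in> reach w m" using root_fhist by (simp add: dedge_def)
  then obtain p where p: "valid_prefix w m p" "p m = x" by (auto simp: reach_def)
  have "c x = counters p m" using inv p unfolding counter_inv_def by blast
  then have "valid_prefix w (Suc m) (p(Suc m := y))"
    using e p by (intro valid_prefix_extend[OF p(1)]) (simp_all add: dedge_def)
  then show "reach_edge w m x y" unfolding reach_edge_def using p(2) by (intro exI[of _ "p(Suc m := y)"]) simp
next
  assume "reach_edge w m x y"
  then obtain p where p: "valid_prefix w (Suc m) p" "p m = x" "p (Suc m) = y"
    by (auto simp: reach_edge_def)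
  have pm: "valid_prefix w m p" using valid_prefix_mono[OF p(1)] by simp
  then have "x \<in> reach w m" "c x = counters p m"
    using p(2) inv unfolding counter_inv_def reach_def by auto
  moreover have "(x, w m, y) \<in> Delta" "live Delta y" "counts_ok Obl (counters p (Suc m))"
    using p unfolding valid_prefix_def by auto
  ultimately show "dedge (fhist w m) c (w m) x y" using root_fhist p(3) by (simp add: dedge_def)
qed

lemma dpost_eq: "counter_inv w m c \<Longrightarrow> dpost (fhist w m) c (w m) = fpost w m"
  using dedge_iff_reach_edge
  by (auto simp: dpost_def layered_forest.post_def[OF reach_forest] fun_eq_iff)

lemma counter_inv_init: "counter_inv w 0 (fst (snd dinit))"
  unfolding counter_inv_def using init_states_eq[of w]
  by (auto simp: dinit_def reach_def)

(* Inductive step of the simulation: the new counter of y is computed from its unique parent. *)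
lemma counter_inv_step:
  assumes inv: "counter_inv w m c"
  shows "counter_inv w (Suc m) (fst (snd (dstep (fhist w m, c, p) (w m))))"
  unfolding counter_inv_def
proof (intro conjI allI impI)
  have post: "dpost (fhist w m) c (w m) (root (fhist w m)) = reach w (Suc m)"
    using dpost_eq[OF inv] root_fhist layered_forest.post_succ_map[OF reach_forest]
    by (simp add: succ_map_def)
  fix q assume q: "valid_prefix w (Suc m) q"
  have edge: "reach_edge w m (q m) (q (Suc m))" using q by (auto simp: reach_edge_def)
  define x0 where "x0 = (SOME x. dedge (fhist w m) c (w m) x (q (Suc m)))"
  have "dedge (fhist w m) c (w m) (q m) (q (Suc m))" using edge dedge_iff_reach_edge[OF inv] by simp
  then have "dedge (fhist w m) c (w m) x0 (q (Suc m))" unfolding x0_def by (rule someI)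
  then have "x0 = q m"
    using dedge_iff_reach_edge[OF inv] layered_forest.parent_unique[OF reach_forest edge] by simp
  moreover have "c (q m) = counters q m"
    using inv valid_prefix_mono[OF q] unfolding counter_inv_def by simp
  moreover have "q (Suc m) \<in> reach w (Suc m)" using q by (auto simp: reach_def)
  ultimately show "fst (snd (dstep (fhist w m, c, p) (w m))) (q (Suc m)) = counters q (Suc m)"
    using post by (simp add: dstep_def x0_def)
next
  fix y assume "y \<notin> reach w (Suc m)"
  moreover have "dpost (fhist w m) c (w m) (root (fhist w m)) = reach w (Suc m)"
    using dpost_eq[OF inv] root_fhist layered_forest.post_succ_map[OF reach_forest]
    by (simp add: succ_map_def)
  ultimately show "fst (snd (dstep (fhist w m, c, p) (w m))) y = (if y \<in> Q then count_init Obl else undefined)"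
    by (simp add: dstep_def)
qed

lemma drun_simulates: "fst (drun w m) = fhist w m \<and> counter_inv w m (fst (snd (drun w m)))"
proof (induction m)
  case 0
  show ?case using init_states_eq[of w] counter_inv_init
    by (simp add: dinit_def layered_forest.hist.simps[OF reach_forest])
next
  case (Suc m)
  obtain L c p where run: "drun w m = (L, c, p)" by (metis prod.exhaust)
  then have L: "L = fhist w m" and inv: "counter_inv w m c" using Suc by simp_all
  have "fst (drun w (Suc m)) = fhist w (Suc m)"
    using run L dpost_eq[OF inv] by (simp add: dstep_def layered_forest.hist.simps[OF reach_forest])
  moreover have "counter_inv w (Suc m) (fst (snd (drun w (Suc m))))"
    using counter_inv_step[OF inv, of p] run L by simp
  ultimately show ?case by simp
qed

lemma drun_prio: "snd (snd (drun w (Suc m))) = fprio w m"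
proof -
  obtain L c p where run: "drun w m = (L, c, p)" by (metis prod.exhaust)
  then have L: "L = fhist w m" and inv: "counter_inv w m c" using drun_simulates[of w m] by simp_all
  show ?thesis using run L dpost_eq[OF inv] by (simp add: dstep_def layered_forest.prio_def[OF reach_forest])
qed

lemma counters_gap: "ob \<in> Obl \<Longrightarrow> counters p i ob = gap p (fst ob) i"
  by (induction i) (auto simp: count_step_def count_init_def)

lemma counts_ok_iff_infix: "(\<forall>i. counts_ok Obl (counters p i)) \<longleftrightarrow> (\<forall>(G, b)\<in>Obl. infix_cond p G b)"
proof -
  have "(\<forall>i. counts_ok Obl (counters p i)) \<longleftrightarrow> (\<forall>ob\<in>Obl. \<forall>i. gap p (fst ob) i < snd ob)"
    unfolding counts_ok_def using counters_gap by auto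
  also have "\<dots> \<longleftrightarrow> (\<forall>(G, b)\<in>Obl. infix_cond p G b)"
    by (simp add: infix_cond_iff_gap case_prod_unfold)
  finally show ?thesis .
qed

(* Along an infinite branch of the forest every prefix is valid (prefixes are unique). *)
lemma branch_valid_prefix:
  assumes branch: "\<forall>m. reach_edge w m (x m) (x (Suc m))"
  shows "valid_prefix w m x"
proof (induction m)
  case 0
  from branch obtain p where p: "valid_prefix w (Suc 0) p" "p 0 = x 0" unfolding reach_edge_def by blast
  have "valid_prefix w 0 p" using valid_prefix_mono[OF p(1)] by simp
  then show ?case by (rule valid_prefix_cong[rotated]) (simp add: p(2))
next
  case (Suc m)
  from branch obtain p where p: "valid_prefix w (Suc m) p" "p m = x m" "p (Suc m) = x (Suc m)"
    unfolding reach_edge_def by blast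
  from valid_prefix_unique[OF valid_prefix_mono[OF p(1)] Suc.IH p(2)] p(3)
  have "\<forall>j\<le>Suc m. p j = x j" by (simp add: le_Suc_eq)
  then show ?case using p(1) by (rule valid_prefix_cong)
qed

lemma branch_iff_run:
  "(\<exists>x. (\<forall>m. reach_edge w m (x m) (x (Suc m))) \<and> (\<exists>\<^sub>\<infinity>m. x m \<in> F)) \<longleftrightarrow>
   (\<exists>\<rho>. buchi_run Q0 Delta w \<rho> \<and> buchi_accepting F \<rho> \<and> (\<forall>(G, b)\<in>Obl. infix_cond \<rho> G b))"
proof
  assume "\<exists>x. (\<forall>m. reach_edge w m (x m) (x (Suc m))) \<and> (\<exists>\<^sub>\<infinity>m. x m \<in> F)"
  then obtain x where x: "\<forall>m. reach_edge w m (x m) (x (Suc m))" "\<exists>\<^sub>\<infinity>m. x m \<in> F" by blast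
  have v: "valid_prefix w m x" for m by (rule branch_valid_prefix[OF x(1)])
  have "buchi_run Q0 Delta w x" unfolding buchi_run_def
  proof (intro conjI allI)
    show "x 0 \<in> Q0" using v[of 0] by (simp add: valid_prefix_def)
    fix m show "(x m, w m, x (Suc m)) \<in> Delta" using v[of "Suc m"] by (simp add: valid_prefix_def)
  qed
  moreover have "counts_ok Obl (counters x i)" for i using v[of i] by (simp add: valid_prefix_def)
  then have "\<forall>(G, b)\<in>Obl. infix_cond x G b" using counts_ok_iff_infix by blast
  ultimately show "\<exists>\<rho>. buchi_run Q0 Delta w \<rho> \<and> buchi_accepting F \<rho> \<and> (\<forall>(G, b)\<in>Obl. infix_cond \<rho> G b)"
    using x(2) unfolding buchi_accepting_def by blast
next
  assume "\<exists>\<rho>. buchi_run Q0 Delta w \<rho> \<and> buchi_accepting F \<rho> \<and> (\<forall>(G, b)\<in>Obl. infix_cond \<rho> G b)"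
  then obtain \<rho> where r: "buchi_run Q0 Delta w \<rho>" "buchi_accepting F \<rho>" "\<forall>(G, b)\<in>Obl. infix_cond \<rho> G b"
    by blast
  have step: "(\<rho> i, w i, \<rho> (Suc i)) \<in> Delta" for i using r(1) by (simp add: buchi_run_def)
  have "live Delta (\<rho> i)" for i
    unfolding live_def by (rule exI[of _ "\<lambda>j. \<rho> (i + j)"], rule exI[of _ "\<lambda>j. w (i + j)"]) (simp add: step)
  moreover have "\<forall>i. counts_ok Obl (counters \<rho> i)" using r(3) counts_ok_iff_infix by blast
  ultimately have "valid_prefix w m \<rho>" for m
    using r(1) step by (simp add: valid_prefix_def buchi_run_def)
  then have "\<forall>m. reach_edge w m (\<rho> m) (\<rho> (Suc m))" unfolding reach_edge_def by blast
  then show "\<exists>x. (\<forall>m. reach_edge w m (x m) (x (Suc m))) \<and> (\<exists>\<^sub>\<infinity>m. x m \<in> F)"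
    using r(2) unfolding buchi_accepting_def by blast
qed

lemma INFM_Suc_iff: "(\<exists>\<^sub>\<infinity>m. P (Suc m)) \<longleftrightarrow> (\<exists>\<^sub>\<infinity>m. P m)"
  using MOST_Suc_iff[of "\<lambda>m. \<not> P m"] by (simp add: not_INFM[symmetric] del: not_INFM)

theorem drun_accepts_iff:
  "even (Min {p. \<exists>\<^sub>\<infinity>m. snd (snd (drun w m)) = p}) \<longleftrightarrow>
   (\<exists>\<rho>. buchi_run Q0 Delta w \<rho> \<and> buchi_accepting F \<rho> \<and> (\<forall>(G, b)\<in>Obl. infix_cond \<rho> G b))"
proof -
  have "{p. \<exists>\<^sub>\<infinity>m. snd (snd (drun w m)) = p} = {p. \<exists>\<^sub>\<infinity>m. snd (snd (drun w (Suc m))) = p}"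
    using INFM_Suc_iff[of "\<lambda>m. snd (snd (drun w m)) = _"] by auto
  also have "\<dots> = layered_forest.limit_prios (reach w) (reach_edge w) F n"
    by (simp only: drun_prio layered_forest.limit_prios_def[OF reach_forest])
  finally show ?thesis
    using layered_forest.even_iff_branch[OF reach_forest] branch_iff_run by simp
qed

end

section \<open>Counting states\<close>

lemma dpa_run_foldl: "dpa_run s0 step w m = foldl step s0 (map w [0..<m])"
  by (induction m) simp_all

lemma dpa_renumber:
  fixes s0 :: 's and step :: "'s \<Rightarrow> 'a \<Rightarrow> 's" and pri :: "'s \<Rightarrow> nat" and Sig :: "'a set"
  defines "R \<equiv> {foldl step s0 xs | xs. set xs \<subseteq> Sig}"
  assumes fin: "finite R"
  shows "\<exists>(Q' :: nat set) q0 \<delta> c. dpa_wf Q' Sig q0 \<delta> c \<and> card Q' = card R \<and> c ` Q' = pri ` R \<and>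
           (\<forall>w. omega_word Sig w \<longrightarrow> (\<forall>m. c (dpa_run q0 \<delta> w m) = pri (dpa_run s0 step w m)))"
proof -
  have init: "s0 \<in> R" unfolding R_def by (intro CollectI exI[of _ "[]"]) simp
  have closed: "step s a \<in> R" if s: "s \<in> R" and a: "a \<in> Sig" for s a
  proof -
    obtain xs where "s = foldl step s0 xs" "set xs \<subseteq> Sig" using s unfolding R_def by blast
    then have "step s a = foldl step s0 (xs @ [a])" "set (xs @ [a]) \<subseteq> Sig" using a by auto
    then show ?thesis unfolding R_def by blast
  qed
  have runs: "dpa_run s0 step w m \<in> R" if "omega_word Sig w" for w m
  proof -
    have "set (map w [0..<m]) \<subseteq> Sig" using that by (auto simp: omega_word_def)
    then show ?thesis unfolding dpa_run_foldl R_def by blast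
  qed
  from ex_bij_betw_finite_nat[OF fin] obtain h where h: "bij_betw h R {0..<card R}" by blast
  define Q' where "Q' = {0..<card R}"
  define \<delta> where "\<delta> q a = h (step (inv_into R h q) a)" for q a
  define c where "c q = pri (inv_into R h q)" for q
  have hR: "h ` R = Q'" and inj: "inj_on h R" using h unfolding Q'_def bij_betw_def by auto
  have inv_in: "inv_into R h q \<in> R" if "q \<in> Q'" for q using that hR by (auto intro: inv_into_into)
  have "dpa_wf Q' Sig (h s0) \<delta> c"
    unfolding dpa_wf_def \<delta>_def Q'_def[symmetric] using hR init inv_in closed by (auto simp: Q'_def)
  moreover have "c ` Q' = pri ` R" unfolding c_def using hR inj by (force simp: image_comp)
  moreover have "dpa_run (h s0) \<delta> w m = h (dpa_run s0 step w m)" if "omega_word Sig w" for w m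
    by (induction m) (simp_all add: \<delta>_def inj runs[OF that])
  then have "c (dpa_run (h s0) \<delta> w m) = pri (dpa_run s0 step w m)" if "omega_word Sig w" for w m
    using that inj runs by (simp add: c_def)
  ultimately show ?thesis by (intro exI[of _ Q'] exI[of _ "h s0"] exI[of _ \<delta>] exI[of _ c]) (simp add: Q'_def)
qed

lemma geometric_sum_le: "(2::nat) \<le> r \<Longrightarrow> (\<Sum>i\<le>k. r^i) \<le> 2 * r^k"
proof (induction k)
  case (Suc k)
  have "(\<Sum>i\<le>Suc k. r^i) \<le> 2 * r^k + r^Suc k" using Suc by simp
  also have "2 * r^k \<le> r^Suc k" using Suc.prems by simp
  then have "2 * r^k + r^Suc k \<le> 2 * r^Suc k" by simp
  finally show ?case .
qed simp

lemma card_set_lists: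
  assumes "finite Q"
  shows "card {L. set L \<subseteq> Pow Q \<and> length L \<le> card Q} \<le> 2 * 2 ^ (card Q * card Q)"
proof -
  let ?n = "card Q"
  have card: "card {L. set L \<subseteq> Pow Q \<and> length L \<le> ?n} = (\<Sum>i\<le>?n. (2^?n)^i)"
    using card_lists_length_le[of "Pow Q" ?n] assms by (simp add: card_Pow)
  show ?thesis
  proof (cases "?n = 0")
    case False
    then have "(2::nat) \<le> 2^?n" using power_increasing[of 1 ?n "2::nat"] by simp
    then show ?thesis using geometric_sum_le[of "2^?n" ?n] card by (simp add: power_mult)
  qed (use card in simp)
qed

lemma odd_le_four_pow: "2 * k + 1 \<le> (4::nat) ^ k"
  by (induction k) simp_all

lemma size_arithmetic:
  fixes n P P' :: nat
  assumes "P \<le> P'"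
  shows "(2 * 2 ^ (n * n)) * (P ^ n * (2 * n + 1)) \<le> 2 ^ ((n + 1)^2) * P' ^ n"
proof -
  have "(2 * 2 ^ (n * n)) * (P ^ n * (2 * n + 1)) \<le> (2 * 2 ^ (n * n)) * (P' ^ n * (2 * n + 1))"
    using assms by (intro mult_left_mono mult_right_mono power_mono) simp_all
  also have "\<dots> = (2 * (2 * n + 1) * 2 ^ (n * n)) * P' ^ n" by (simp add: algebra_simps)
  also have "\<dots> \<le> (2 * 4 ^ n * 2 ^ (n * n)) * P' ^ n"
    using odd_le_four_pow[of n] by (intro mult_right_mono) simp_all
  also have "2 * 4 ^ n * 2 ^ (n * n) = (2::nat) ^ ((n + 1)^2)"
  proof -
    have "(4::nat) ^ n = 2 ^ (2 * n)" by (simp add: power_mult)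
    moreover have "(n + 1)^2 = n * n + 2 * n + 1" by (simp add: power2_eq_square)
    ultimately show ?thesis by (simp add: power_add)
  qed
  finally show ?thesis .
qed

context obligation_automaton
begin

definition state_space :: "('q, 'q) dstate set" where
  "state_space = {L. set L \<subseteq> Pow Q \<and> length L \<le> n} \<times> (\<Pi>\<^sub>E y\<in>Q. \<Pi>\<^sub>E ob\<in>Obl. {..<snd ob}) \<times> {1..2*n+1}"

lemma state_space_finite: "finite state_space"
  unfolding state_space_def using finite_lists_length_le[of "Pow Q" n] finite_Q finite_Obl
  by (auto intro!: finite_PiE)

lemma card_state_space: "card state_space \<le> 2 ^ ((n + 1)^2) * (\<Prod>(G, b)\<in>Obl. b + 1) ^ n"
proof -
  have "card (\<Pi>\<^sub>E ob\<in>Obl. {..<snd ob}) = (\<Prod>ob\<in>Obl. snd ob)"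
    using card_PiE[OF finite_Obl, of "\<lambda>ob. {..<snd ob}"] by simp
  then have counters: "card (\<Pi>\<^sub>E y\<in>Q. \<Pi>\<^sub>E ob\<in>Obl. {..<snd ob}) = (\<Prod>ob\<in>Obl. snd ob) ^ n"
    using card_PiE[OF finite_Q, of "\<lambda>_. \<Pi>\<^sub>E ob\<in>Obl. {..<snd ob}"] by simp
  have "card state_space = card {L. set L \<subseteq> Pow Q \<and> length L \<le> n} * ((\<Prod>ob\<in>Obl. snd ob) ^ n * (2*n+1))"
    unfolding state_space_def using counters by (simp add: card_cartesian_product)
  also have "\<dots> \<le> (2 * 2 ^ (n * n)) * ((\<Prod>ob\<in>Obl. snd ob) ^ n * (2*n+1))"
    using card_set_lists[OF finite_Q] by (rule mult_right_mono) simp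
  also have "\<dots> \<le> 2 ^ ((n + 1)^2) * (\<Prod>(G, b)\<in>Obl. b + 1) ^ n"
    by (rule size_arithmetic, rule prod_mono) auto
  finally show ?thesis .
qed

lemma counter_inv_in_space:
  assumes inv: "counter_inv w m c"
  shows "c \<in> (\<Pi>\<^sub>E y\<in>Q. \<Pi>\<^sub>E ob\<in>Obl. {..<snd ob})"
proof (rule PiE_I)
  fix y assume yQ: "y \<in> Q"
  show "c y \<in> (\<Pi>\<^sub>E ob\<in>Obl. {..<snd ob})"
  proof (cases "y \<in> reach w m")
    case True
    then obtain p where p: "valid_prefix w m p" "p m = y" by (auto simp: reach_def)
    then have "c y = counters p m" "counts_ok Obl (counters p m)"
      using inv unfolding counter_inv_def valid_prefix_def by auto
    moreover have "counters p m ob = undefined" if "ob \<notin> Obl" for ob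
      using that by (cases m) (simp_all add: count_step_def)
    ultimately show ?thesis by (auto simp: counts_ok_def PiE_iff extensional_def)
  next
    case False
    then have "c y = count_init Obl" using inv yQ by (simp add: counter_inv_def)
    then show ?thesis using Obl_valid by (auto simp: count_init_def PiE_iff extensional_def)
  qed
next
  fix y assume "y \<notin> Q"
  then have "y \<notin> reach w m" using reach_subset by blast
  then show "c y = undefined" using inv \<open>y \<notin> Q\<close> by (simp add: counter_inv_def)
qed

lemma drun_in_space: "drun w m \<in> state_space"
proof -
  obtain L c p where run: "drun w m = (L, c, p)" by (metis prod.exhaust)
  have L: "L = fhist w m" and inv: "counter_inv w m c" using drun_simulates[of w m] run by simp_all
  have hinv: "hist_inv (reach w m) L" using layered_forest.hist_invariant[OF reach_forest] L by simp
  have "length L \<le> card (reach w m)"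
    using hist_inv_length[OF hinv] reach_subset finite_Q finite_subset by blast
  also have "\<dots> \<le> n" using reach_subset finite_Q by (rule card_mono[rotated])
  finally have "length L \<le> n" .
  moreover have "set L \<subseteq> Pow Q" using hinv reach_subset by (fastforce simp: hist_inv_def in_set_conv_nth)
  moreover have "p \<in> {1..2*n+1}"
  proof (cases m)
    case 0 then show ?thesis using run by (simp add: dinit_def)
  next
    case (Suc m')
    then have "p = fprio w m'" using drun_prio[of w m'] run by simp
    then show ?thesis using layered_forest.prio_bounds[OF reach_forest] by simp
  qed
  ultimately show ?thesis using run counter_inv_in_space[OF inv] by (simp add: state_space_def)
qed

lemma reachable_states:
  defines "R \<equiv> {foldl dstep dinit xs | xs. set xs \<subseteq> Sig}"
  shows "finite R" and "card R \<le> 2 ^ ((n + 1)^2) * (\<Prod>(G, b)\<in>Obl. b + 1) ^ n"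
    and "(\<lambda>s. snd (snd s)) ` R \<subseteq> {1..2*n+1}"
proof -
  have sub: "R \<subseteq> state_space"
  proof
    fix s assume "s \<in> R"
    then obtain xs where xs: "s = foldl dstep dinit xs" unfolding R_def by blast
    define w where "w i = (if i < length xs then xs ! i else undefined)" for i
    have "map w [0..<length xs] = xs" by (rule nth_equalityI) (simp_all add: w_def)
    then have "s = drun w (length xs)" using xs by (simp add: dpa_run_foldl)
    then show "s \<in> state_space" using drun_in_space by simp
  qed
  then show "finite R" using state_space_finite by (rule finite_subset)
  show "card R \<le> 2 ^ ((n + 1)^2) * (\<Prod>(G, b)\<in>Obl. b + 1) ^ n"
    using card_mono[OF state_space_finite sub] card_state_space by simp
  show "(\<lambda>s. snd (snd s)) ` R \<subseteq> {1..2*n+1}" using sub by (auto simp: state_space_def)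
qed

end

theorem mainTheorem11:
  fixes Q :: "'q set" and Sig :: "'a set" and Q0 :: "'q set"
    and Delta :: "('q \<times> 'a \<times> 'q) set" and F :: "'q set"
    and Obl :: "('q set \<times> nat) set"
  assumes "buchi_wf Q Sig Q0 Delta F"
    and "non_confluent Q0 Delta"
    and "finite Obl"
    and "\<forall>(G, b)\<in>Obl. G \<subseteq> Q \<and> b > 0"
  shows "\<exists>(Q' :: nat set) q0 \<delta> c.
           dpa_wf Q' Sig q0 \<delta> c \<and>
           (\<forall>w. omega_word Sig w \<longrightarrow>
              (dpa_accepts q0 \<delta> c w \<longleftrightarrow>
                 (\<exists>\<rho>. buchi_run Q0 Delta w \<rho> \<and> buchi_accepting F \<rho> \<and>
                      (\<forall>(G, b)\<in>Obl. infix_cond \<rho> G b)))) \<and>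
           card Q' \<le> 2 ^ ((card Q + 1)^2) * (\<Prod>(G, b)\<in>Obl. b + 1) ^ card Q \<and>
           card (c ` Q') \<le> 2 * card Q + 1"
proof -
  interpret obligation_automaton Q Sig Q0 Delta F Obl using assms by unfold_locales
  let ?R = "{foldl dstep dinit xs | xs. set xs \<subseteq> Sig}"
  obtain Q' :: "nat set" and q0 \<delta> c where dpa: "dpa_wf Q' Sig q0 \<delta> c" and size: "card Q' = card ?R"
    and prios: "c ` Q' = (\<lambda>s. snd (snd s)) ` ?R"
    and runs: "\<forall>w. omega_word Sig w \<longrightarrow> (\<forall>m. c (dpa_run q0 \<delta> w m) = snd (snd (drun w m)))"
    using dpa_renumber[OF reachable_states(1), of "\<lambda>s. snd (snd s)"] by (elim exE conjE) (rule that)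
  have "dpa_accepts q0 \<delta> c w \<longleftrightarrow> (\<exists>\<rho>. buchi_run Q0 Delta w \<rho> \<and> buchi_accepting F \<rho> \<and>
          (\<forall>(G, b)\<in>Obl. infix_cond \<rho> G b))" if "omega_word Sig w" for w
  proof -
    have "\<forall>m. c (dpa_run q0 \<delta> w m) = snd (snd (drun w m))" using runs that by blast
    then show ?thesis unfolding dpa_accepts_def using drun_accepts_iff[of w] by simp
  qed
  moreover have "card Q' \<le> 2 ^ ((card Q + 1)^2) * (\<Prod>(G, b)\<in>Obl. b + 1) ^ card Q"
    using size reachable_states(2) by simp
  moreover have "card (c ` Q') \<le> 2 * card Q + 1"
    using card_mono[OF _ reachable_states(3)] prios by simp
  ultimately show ?thesis using dpa by blast
qed

end
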